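(* Let $1\le p<\infty$ and $\psi\in H(\mathbb{D})$. Then the following are equivalent: (a) the multiplication operator $M_\psi: S_2^p\to S_2^p$, $M_\psi f=\psi f$, is bounded; (b) $\psi\in S_2^p$ and the multiplication operators $M_{2\psi'}: H^p\to H^p$ and $M_\psi: H^p\to H^p$ are bounded; (c) $\psi\in S_2^p$ and $$\sup_{a\in\mathbb{D}}\int_{\partial\mathbb{D}}\frac{1-|a|^2}{|1-\overline{a}w|^2}\,|2\psi'(w)|^p\,d\sigma(w)<\infty\quad\text{and}\quad\sup_{a\in\mathbb{D}}\int_{\partial\mathbb{D}}\frac{1-|a|^2}{|1-\overline{a}w|^2}\,|\psi(w)|^p\,d\sigma(w)<\infty.$$
   Context: $\mathbb{D}$ is the open unit disc, $\partial\mathbb{D}$ the unit circle with normalized arc length measure $d\sigma$, $H(\mathbb{D})$ the space of analytic functions on $\mathbb{D}$. For $1\le p<\infty$, $H^p$ is the Hardy space of $f\in H(\mathbb{D})$ with $\|f\|_{H^p}^p=\sup_{0<r<1}\frac{1}{2\pi}\int_0^{2\pi}|f(re^{i\theta})|^p\,d\theta<\infty$. $S_2^p=\{f\in H(\mathbb{D}): f''\in H^p\}$ with norm $\|f\|_{S_2^p}=|f(0)|+|f'(0)|+\|f''\|_{H^p}$. For $u\in H(\mathbb{D})$, $M_u f=uf$. In integrals over $\partial\mathbb{D}$, functions are understood via their boundary (radial limit) values. *)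

theory Defs
  imports "HOL-Complex_Analysis.Complex_Analysis"
begin

definition circle_mean :: "real \<Rightarrow> (complex \<Rightarrow> complex) \<Rightarrow> real \<Rightarrow> ennreal" where
  "circle_mean p f r =
     ennreal (1 / (2 * pi)) *
     (\<integral>\<^sup>+ \<theta>. indicator {0..2*pi} \<theta> *
        ennreal (norm (f (complex_of_real r * cis \<theta>)) powr p) \<partial>lborel)"

definition hardy :: "real \<Rightarrow> (complex \<Rightarrow> complex) set" where
  "hardy p = {f. f holomorphic_on ball 0 1 \<and>
                 (SUP r\<in>{0<..<1}. circle_mean p f r) < \<infinity>}"

definition hardy_norm :: "real \<Rightarrow> (complex \<Rightarrow> complex) \<Rightarrow> real" where
  "hardy_norm p f = enn2real (SUP r\<in>{0<..<1}. circle_mean p f r) powr (1 / p)"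

definition S2p :: "real \<Rightarrow> (complex \<Rightarrow> complex) set" where
  "S2p p = {f. f holomorphic_on ball 0 1 \<and> deriv (deriv f) \<in> hardy p}"

definition S2p_norm :: "real \<Rightarrow> (complex \<Rightarrow> complex) \<Rightarrow> real" where
  "S2p_norm p f = norm (f 0) + norm (deriv f 0) + hardy_norm p (deriv (deriv f))"

definition bounded_mult_op ::
  "(complex \<Rightarrow> complex) set \<Rightarrow> ((complex \<Rightarrow> complex) \<Rightarrow> real) \<Rightarrow> (complex \<Rightarrow> complex) \<Rightarrow> bool" where
  "bounded_mult_op X N u \<longleftrightarrow>
     (\<forall>f\<in>X. (\<lambda>z. u z * f z) \<in> X) \<and>
     (\<exists>C. \<forall>f\<in>X. N (\<lambda>z. u z * f z) \<le> C * N f)"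

text \<open>Boundary value of f at w on the unit circle: the radial limit.\<close>
definition radial_limit :: "(complex \<Rightarrow> complex) \<Rightarrow> complex \<Rightarrow> complex" where
  "radial_limit f w = Lim (at_left 1) (\<lambda>r. f (complex_of_real r * w))"

definition poisson_sup :: "real \<Rightarrow> (complex \<Rightarrow> complex) \<Rightarrow> ennreal" where
  "poisson_sup p g =
     (SUP a\<in>ball 0 1.
        ennreal (1 / (2 * pi)) *
        (\<integral>\<^sup>+ \<theta>. indicator {0..2*pi} \<theta> *
           ennreal ((1 - (norm a)\<^sup>2) / (norm (1 - cnj a * cis \<theta>))\<^sup>2 *
                    norm (radial_limit g (cis \<theta>)) powr p) \<partial>lborel))"

end

theory Submission
  imports Defs
begin

text \<open>
  All three conditions are equivalent to \<open>\<psi> \<in> S2p p\<close>. The point is that every \<open>f \<in> S2p p\<close>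
  has \<open>f\<close> and \<open>f'\<close> bounded: by the Fejer-Riesz inequality (the integral of \<open>|g|\<close> over the
  diameter \<open>[-1,1]\<close> is at most half its integral over the unit circle), the integral of \<open>|f''|\<close>
  along any radius is at most \<open>\<pi>\<close> times the \<open>H\<^sup>1\<close> norm of \<open>f''\<close>, hence at most \<open>2\<pi>\<close> times its
  \<open>H\<^sup>p\<close> norm. So \<open>\<psi>\<close> and \<open>\<psi>'\<close> are bounded and have radial limits everywhere; this makes
  \<open>M\<^sub>\<psi>\<close> and \<open>M\<^sub>2\<^sub>\<psi>\<^sub>'\<close> bounded on \<open>H\<^sup>p\<close> and the Poisson integrals of their boundary values
  finite (the Poisson kernel has mean one), and with the Leibniz rule
  \<open>(\<psi> f)'' = \<psi>'' f + 2 \<psi>' f' + \<psi> f''\<close> it makes \<open>M\<^sub>\<psi>\<close> bounded on \<open>S2p p\<close>. Conversely, each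
  condition contains \<open>\<psi> \<in> S2p p\<close> or yields it by applying \<open>M\<^sub>\<psi>\<close> to the constant \<open>1\<close>.
\<close>

section \<open>Circle averages and Hardy spaces\<close>

definition circle_avg :: "real \<Rightarrow> (complex \<Rightarrow> complex) \<Rightarrow> real \<Rightarrow> real" where
  "circle_avg p f r = integral {0..2*pi} (\<lambda>\<theta>. norm (f (complex_of_real r * cis \<theta>)) powr p) / (2*pi)"

lemma continuous_on_norm_powr_circle:
  assumes "continuous_on (ball 0 1) f" "0 \<le> r" "r < 1" "p > 0"
  shows "continuous_on {0..2*pi} (\<lambda>\<theta>. norm (f (complex_of_real r * cis \<theta>)) powr p)"
proof -
  have "continuous_on UNIV (\<lambda>\<theta>. f (complex_of_real r * cis \<theta>))"
    by (rule continuous_on_compose2[OF assms(1)]) (use assms in \<open>auto simp: norm_mult intro!: continuous_intros\<close>)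
  then have "continuous_on UNIV (\<lambda>\<theta>. norm (f (complex_of_real r * cis \<theta>)) powr p)"
    using assms(4) by (intro continuous_on_powr') (auto intro: continuous_intros)
  then show ?thesis by (rule continuous_on_subset) auto
qed

lemma circle_mean_eq_circle_avg:
  assumes "continuous_on (ball 0 1) f" "0 \<le> r" "r < 1" "p > 0"
  shows "circle_mean p f r = ennreal (circle_avg p f r)"
proof -
  let ?g = "\<lambda>\<theta>. norm (f (complex_of_real r * cis \<theta>)) powr p"
  have "(?g has_integral integral {0..2*pi} ?g) {0..2*pi}"
    by (rule integrable_integral[OF integrable_continuous_real[OF continuous_on_norm_powr_circle[OF assms]]])
  from nn_integral_has_integral_lebesgue[OF _ this]
  have "(\<integral>\<^sup>+ \<theta>. ennreal (indicator {0..2*pi} \<theta> * ?g \<theta>) \<partial>lborel) = ennreal (integral {0..2*pi} ?g)"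
    by simp
  moreover have "(\<lambda>\<theta>. ennreal (indicator {0..2*pi} \<theta> * ?g \<theta>)) = (\<lambda>\<theta>. indicator {0..2*pi} \<theta> * ennreal (?g \<theta>))"
    by (auto simp: indicator_def fun_eq_iff)
  ultimately show ?thesis
    unfolding circle_mean_def circle_avg_def by (simp add: ennreal_mult'[symmetric])
qed

lemma circle_avg_nonneg: "circle_avg p f r \<ge> 0"
proof -
  have "integral {0..2*pi} (\<lambda>\<theta>. norm (f (complex_of_real r * cis \<theta>)) powr p) \<ge> 0"
    by (cases "(\<lambda>\<theta>. norm (f (complex_of_real r * cis \<theta>)) powr p) integrable_on {0..2*pi}")
       (auto intro: integral_nonneg simp: not_integrable_integral)
  then show ?thesis unfolding circle_avg_def by simp
qed

lemma SUP_circle_mean_eq: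
  assumes "continuous_on (ball 0 1) f" "p > 0"
  shows "(SUP r\<in>{0<..<1}. circle_mean p f r) = (SUP r\<in>{0<..<1}. ennreal (circle_avg p f r))"
  using circle_mean_eq_circle_avg[OF assms(1) _ _ assms(2)] by (intro SUP_cong) auto

lemma hardy_norm_nonneg: "hardy_norm p f \<ge> 0"
  by (simp add: hardy_norm_def)

lemma hardy_iff_circle_avg_bounded:
  assumes "p > 0"
  shows "f \<in> hardy p \<longleftrightarrow> f holomorphic_on ball 0 1 \<and> (\<exists>B. \<forall>r\<in>{0<..<1}. circle_avg p f r \<le> B)"
proof (cases "f holomorphic_on ball 0 1")
  case True
  then have c: "continuous_on (ball 0 1) f" by (simp add: holomorphic_on_imp_continuous_on)
  have "(SUP r\<in>{0<..<1}. ennreal (circle_avg p f r)) < \<infinity> \<longleftrightarrow> (\<exists>B. \<forall>r\<in>{0<..<1}. circle_avg p f r \<le> B)"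
  proof
    assume fin: "(SUP r\<in>{0<..<1}. ennreal (circle_avg p f r)) < \<infinity>"
    have "circle_avg p f r \<le> enn2real (SUP r\<in>{0<..<1}. ennreal (circle_avg p f r))" if "r \<in> {0<..<1}" for r
    proof -
      have "ennreal (circle_avg p f r) \<le> (SUP r\<in>{0<..<1}. ennreal (circle_avg p f r))"
        using that by (rule SUP_upper)
      from enn2real_mono[OF this] fin show ?thesis using circle_avg_nonneg by (simp add: top_unique)
    qed
    then show "\<exists>B. \<forall>r\<in>{0<..<1}. circle_avg p f r \<le> B" by blast
  next
    assume "\<exists>B. \<forall>r\<in>{0<..<1}. circle_avg p f r \<le> B"
    then obtain B where "\<forall>r\<in>{0<..<1}. circle_avg p f r \<le> B" by blast
    then have "(SUP r\<in>{0<..<1}. ennreal (circle_avg p f r)) \<le> ennreal B"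
      by (intro SUP_least ennreal_leI) auto
    then show "(SUP r\<in>{0<..<1}. ennreal (circle_avg p f r)) < \<infinity>"
      using le_less_trans by fastforce
  qed
  with True show ?thesis using SUP_circle_mean_eq[OF c assms] by (simp add: hardy_def)
qed (simp add: hardy_def)

lemma circle_avg_le_hardy_norm_powr:
  assumes "f \<in> hardy p" "p > 0" "r \<in> {0<..<1}"
  shows "circle_avg p f r \<le> hardy_norm p f powr p"
proof -
  have c: "continuous_on (ball 0 1) f"
    using assms by (simp add: hardy_def holomorphic_on_imp_continuous_on)
  have fin: "(SUP r\<in>{0<..<1}. ennreal (circle_avg p f r)) < \<infinity>"
    using assms SUP_circle_mean_eq[OF c assms(2)] by (simp add: hardy_def)
  have "ennreal (circle_avg p f r) \<le> (SUP r\<in>{0<..<1}. ennreal (circle_avg p f r))"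
    using assms(3) by (rule SUP_upper)
  from enn2real_mono[OF this] fin
  have "circle_avg p f r \<le> enn2real (SUP r\<in>{0<..<1}. ennreal (circle_avg p f r))"
    using circle_avg_nonneg by (simp add: top_unique)
  also have "\<dots> = hardy_norm p f powr p"
    using assms(2) by (simp add: hardy_norm_def SUP_circle_mean_eq[OF c assms(2)] powr_powr)
  finally show ?thesis .
qed

lemma hardy_norm_le_if_circle_avg_le:
  assumes "continuous_on (ball 0 1) f" "p > 0" "\<And>r. r \<in> {0<..<1} \<Longrightarrow> circle_avg p f r \<le> B"
  shows "hardy_norm p f \<le> B powr (1/p)"
proof -
  have B0: "B \<ge> 0" using assms(3)[of "1/2"] circle_avg_nonneg[of p f "1/2"] by simp
  have "(SUP r\<in>{0<..<1}. ennreal (circle_avg p f r)) \<le> ennreal B"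
    using assms by (intro SUP_least ennreal_leI) auto
  then have "enn2real (SUP r\<in>{0<..<1}. circle_mean p f r) \<le> B"
    unfolding SUP_circle_mean_eq[OF assms(1,2)] by (rule enn2real_leI[OF B0])
  then show ?thesis
    unfolding hardy_norm_def using assms(2) by (intro powr_mono2) auto
qed

lemma circle_avg_le_combination:
  assumes f: "continuous_on (ball 0 1) f" and g1: "continuous_on (ball 0 1) g1"
    and g2: "continuous_on (ball 0 1) g2" and r: "0 \<le> r" "r < 1" and p: "p > 0" "q > 0"
    and le: "\<And>z. z \<in> ball 0 1 \<Longrightarrow>
               norm (f z) powr q \<le> a * norm (g1 z) powr p + b * norm (g2 z) powr p + c"
  shows "circle_avg q f r \<le> a * circle_avg p g1 r + b * circle_avg p g2 r + c"
proof -
  let ?F = "\<lambda>h p \<theta>. norm (h (complex_of_real r * cis \<theta>)) powr p"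
  have i1: "?F f q integrable_on {0..2*pi}" "?F g1 p integrable_on {0..2*pi}"
      "?F g2 p integrable_on {0..2*pi}"
    using integrable_continuous_real[OF continuous_on_norm_powr_circle[OF _ r]] f g1 g2 p by auto
  have i2: "(\<lambda>\<theta>. a * ?F g1 p \<theta>) integrable_on {0..2*pi}" "(\<lambda>\<theta>. b * ?F g2 p \<theta>) integrable_on {0..2*pi}"
    using integrable_on_cmult_left[OF i1(2)] integrable_on_cmult_left[OF i1(3)] by auto
  have i3: "(\<lambda>\<theta>. a * ?F g1 p \<theta> + b * ?F g2 p \<theta>) integrable_on {0..2*pi}"
    using integrable_add[OF i2] by simp
  have i4: "(\<lambda>\<theta>. a * ?F g1 p \<theta> + b * ?F g2 p \<theta> + c) integrable_on {0..2*pi}"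
    using integrable_add[OF i3 integrable_const_ivl[of c 0 "2*pi"]] by simp
  have inb: "complex_of_real r * cis \<theta> \<in> ball 0 1" for \<theta> using r by (simp add: norm_mult)
  have "integral {0..2*pi} (?F f q) \<le> integral {0..2*pi} (\<lambda>\<theta>. a * ?F g1 p \<theta> + b * ?F g2 p \<theta> + c)"
    using i1 i4 le[OF inb] by (intro integral_le) auto
  also have "\<dots> = a * integral {0..2*pi} (?F g1 p) + b * integral {0..2*pi} (?F g2 p) + c * (2*pi)"
    by (simp only: integral_add[OF i3 integrable_const_ivl] integral_add[OF i2] integral_mult_right)
       (simp add: mult.commute)
  finally show ?thesis unfolding circle_avg_def by (simp add: field_simps)
qed

lemma powr_sum3_le:
  fixes a b c p :: real
  assumes "a \<ge> 0" "b \<ge> 0" "c \<ge> 0" "p > 0"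
  shows "(a + b + c) powr p \<le> 3 powr p * (a powr p + b powr p + c powr p)"
proof -
  define m where "m = max a (max b c)"
  have "(a + b + c) powr p \<le> (3 * m) powr p"
    using assms by (intro powr_mono2) (auto simp: m_def)
  also have "\<dots> = 3 powr p * m powr p" using assms by (simp add: powr_mult m_def)
  also have "m powr p \<le> a powr p + b powr p + c powr p"
    unfolding m_def by (smt (verit) powr_ge_zero)
  finally show ?thesis by (simp add: mult_left_mono)
qed

lemma powr_add3_le:
  fixes a b c p :: real
  assumes "a \<ge> 0" "b \<ge> 0" "c \<ge> 0" "p > 0"
  shows "a powr p + b powr p + c powr p \<le> 3 * (a + b + c) powr p"
proof -
  have "a powr p \<le> (a + b + c) powr p" "b powr p \<le> (a + b + c) powr p" "c powr p \<le> (a + b + c) powr p"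
    using assms by (auto intro!: powr_mono2)
  then show ?thesis by linarith
qed

text \<open>A crude Minkowski inequality, sufficient for boundedness of operators.\<close>
lemma hardy_norm_le_pointwise:
  assumes p: "p > 0" and hD: "D holomorphic_on ball 0 1" and g: "g1 \<in> hardy p" "g2 \<in> hardy p"
    and abc: "a \<ge> 0" "b \<ge> 0" "c \<ge> 0"
    and le: "\<And>z. z \<in> ball 0 1 \<Longrightarrow> norm (D z) \<le> a * norm (g1 z) + b * norm (g2 z) + c"
  shows "D \<in> hardy p"
    "hardy_norm p D \<le> 3 powr (1 + 1/p) * (a * hardy_norm p g1 + b * hardy_norm p g2 + c)"
proof -
  have cont: "continuous_on (ball 0 1) D" "continuous_on (ball 0 1) g1" "continuous_on (ball 0 1) g2"
    using hD g by (auto simp: hardy_def holomorphic_on_imp_continuous_on)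
  define S where "S = a * hardy_norm p g1 + b * hardy_norm p g2 + c"
  have S0: "S \<ge> 0" using abc by (simp add: S_def hardy_norm_nonneg)
  have pw: "norm (D z) powr p \<le>
      3 powr p * a powr p * norm (g1 z) powr p + 3 powr p * b powr p * norm (g2 z) powr p + 3 powr p * c powr p"
    if "z \<in> ball 0 1" for z
  proof -
    have "norm (D z) powr p \<le> (a * norm (g1 z) + b * norm (g2 z) + c) powr p"
      using le[OF that] p by (intro powr_mono2) auto
    also have "\<dots> \<le> 3 powr p * ((a * norm (g1 z)) powr p + (b * norm (g2 z)) powr p + c powr p)"
      using abc p by (intro powr_sum3_le) auto
    also have "\<dots> = 3 powr p * a powr p * norm (g1 z) powr p + 3 powr p * b powr p * norm (g2 z) powr p
                    + 3 powr p * c powr p"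
      using abc by (simp only: powr_mult norm_ge_zero distrib_left mult.assoc)
    finally show ?thesis .
  qed
  have avg: "circle_avg p D r \<le> 3 * (3 * S) powr p" if r: "r \<in> {0<..<1}" for r
  proof -
    have "circle_avg p D r \<le>
        3 powr p * a powr p * circle_avg p g1 r + 3 powr p * b powr p * circle_avg p g2 r + 3 powr p * c powr p"
      using r by (intro circle_avg_le_combination[OF cont _ _ p p pw]) auto
    also have "\<dots> \<le> 3 powr p * a powr p * hardy_norm p g1 powr p + 3 powr p * b powr p * hardy_norm p g2 powr p
                    + 3 powr p * c powr p"
      using circle_avg_le_hardy_norm_powr[OF g(1) p r] circle_avg_le_hardy_norm_powr[OF g(2) p r]
      by (intro add_mono mult_left_mono order_refl) auto
    also have "\<dots> = 3 powr p * ((a * hardy_norm p g1) powr p + (b * hardy_norm p g2) powr p + c powr p)"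
      using abc by (simp only: powr_mult hardy_norm_nonneg distrib_left mult.assoc)
    also have "\<dots> \<le> 3 powr p * (3 * S powr p)"
      unfolding S_def using abc p by (intro mult_left_mono powr_add3_le) (auto simp: hardy_norm_nonneg)
    also have "\<dots> = 3 * (3 * S) powr p"
      using S0 by (simp add: powr_mult)
    finally show ?thesis .
  qed
  then show "D \<in> hardy p" using hD hardy_iff_circle_avg_bounded[OF p] by blast
  have "hardy_norm p D \<le> (3 * (3 * S) powr p) powr (1/p)"
    by (rule hardy_norm_le_if_circle_avg_le[OF cont(1) p avg])
  also have "\<dots> = 3 powr (1 + 1/p) * S"
    using p S0 by (simp add: powr_mult powr_powr powr_add)
  finally show "hardy_norm p D \<le> 3 powr (1 + 1/p) * S" .
qed

lemma bounded_mult_op_hardy: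
  assumes p: "p > 0" and u: "u holomorphic_on ball 0 1"
    and K: "\<And>z. z \<in> ball 0 1 \<Longrightarrow> norm (u z) \<le> K"
  shows "bounded_mult_op (hardy p) (hardy_norm p) u"
proof -
  have K0: "K \<ge> 0" using K[of 0] by (meson norm_ge_zero order_trans centre_in_ball zero_less_one)
  have "(\<lambda>z. u z * f z) \<in> hardy p \<and> hardy_norm p (\<lambda>z. u z * f z) \<le> (3 powr (1 + 1/p) * K) * hardy_norm p f"
    if f: "f \<in> hardy p" for f
  proof -
    have "f holomorphic_on ball 0 1" using f by (simp add: hardy_def)
    then have hD: "(\<lambda>z. u z * f z) holomorphic_on ball 0 1" using u by (intro holomorphic_intros)
    have "norm (u z * f z) \<le> K * norm (f z) + 0 * norm (f z) + 0" if "z \<in> ball 0 1" for z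
      using mult_right_mono[OF K[OF that] norm_ge_zero[of "f z"]] by (simp add: norm_mult)
    from hardy_norm_le_pointwise[OF p hD f f K0 order_refl order_refl this]
    show ?thesis by (simp add: mult.assoc)
  qed
  then show ?thesis unfolding bounded_mult_op_def by blast
qed

lemma le_powr_mult_add:
  fixes x t p :: real
  assumes "x \<ge> 0" "t > 0" "p \<ge> 1"
  shows "x \<le> t powr (1 - p) * x powr p + t"
proof (cases "x \<le> t")
  case True then show ?thesis using assms by (smt (verit) mult_nonneg_nonneg powr_ge_zero)
next
  case False
  have "x * t powr (p - 1) \<le> x * x powr (p - 1)"
    using False assms by (intro mult_left_mono powr_mono2) auto
  also have "x * x powr (p - 1) = x powr p" using False assms by (simp add: powr_mult_base)
  finally have "t powr (1 - p) * (x * t powr (p - 1)) \<le> t powr (1 - p) * x powr p"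
    by (intro mult_left_mono) auto
  moreover have "t powr (1 - p) * (x * t powr (p - 1)) = x"
    using assms by (simp add: powr_add[symmetric] mult.left_commute)
  ultimately show ?thesis using assms by linarith
qed

text \<open>Apply \<open>le_powr_mult_add\<close> pointwise with \<open>t\<close> slightly larger than the \<open>H\<^sup>p\<close> norm.\<close>
lemma circle_avg_1_le_hardy_norm:
  assumes p: "p \<ge> 1" and g: "g \<in> hardy p" and r: "r \<in> {0<..<1}"
  shows "circle_avg 1 g r \<le> 2 * hardy_norm p g"
proof (rule field_le_epsilon)
  fix e :: real assume e: "e > 0"
  have p0: "p > 0" using p by simp
  define N where "N = hardy_norm p g"
  define t where "t = N + e / 2"
  have N0: "N \<ge> 0" by (simp add: N_def hardy_norm_nonneg)
  then have t: "t > 0" using e by (simp add: t_def)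
  have cg: "continuous_on (ball 0 1) g"
    using g by (simp add: hardy_def holomorphic_on_imp_continuous_on)
  have "norm (g z) powr 1 \<le> t powr (1 - p) * norm (g z) powr p + 0 * norm (g z) powr p + t" for z
    using le_powr_mult_add[OF norm_ge_zero t p] by simp
  then have "circle_avg 1 g r \<le> t powr (1 - p) * circle_avg p g r + 0 * circle_avg p g r + t"
    using r by (intro circle_avg_le_combination[OF cg cg cg _ _ p0]) auto
  also have "\<dots> \<le> t powr (1 - p) * N powr p + t"
    using circle_avg_le_hardy_norm_powr[OF g p0 r] by (simp add: mult_left_mono N_def)
  also have "t powr (1 - p) * N powr p \<le> t powr (1 - p) * t powr p"
    using N0 t p0 e by (intro mult_left_mono powr_mono2) (auto simp: t_def)
  also have "t powr (1 - p) * t powr p = t" using t by (simp add: powr_add[symmetric])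
  finally show "circle_avg 1 g r \<le> 2 * hardy_norm p g + e" by (simp add: t_def N_def)
qed

section \<open>The Fejer-Riesz inequality\<close>

lemma cis_plus_2pi: "cis (x + 2*pi) = cis x"
  by (simp add: complex_eq_iff)

lemma integral_periodic_shift:
  fixes q :: "real \<Rightarrow> real"
  assumes cq: "continuous_on UNIV q" and per: "\<And>t. q (t + 2*pi) = q t"
  shows "integral {0..2*pi} (\<lambda>t. q (t + \<alpha>)) = integral {0..2*pi} q"
proof -
  define N where "N = \<bar>\<alpha>\<bar> + 4*pi"
  define \<Phi> where "\<Phi> x = integral {-N..x} q" for x
  define F where "F a = \<Phi> (a + 2*pi) - \<Phi> a" for a
  have intq: "q integrable_on {a..b}" for a b
    by (rule integrable_continuous_real) (rule continuous_on_subset[OF cq], auto)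
  have F_eq: "integral {a..a+2*pi} q = F a" if "-N \<le> a" for a
    using Henstock_Kurzweil_Integration.integral_combine[where a="-N" and c=a and b="a+2*pi" and f=q, OF that _ intq]
    by (simp add: F_def \<Phi>_def)
  have der: "(\<Phi> has_real_derivative q x) (at x)" if "x \<in> {-N<..<N}" for x
  proof -
    have "continuous_on {-N..N} q" using continuous_on_subset[OF cq] by auto
    from integral_has_real_derivative[OF this, of x] that
    show ?thesis unfolding \<Phi>_def using at_within_Icc_at[of "-N" x N] by auto
  qed
  have F0: "(F has_real_derivative 0) (at a)" if "a \<in> {-N<..<N-2*pi}" for a
  proof -
    have a: "a + 2*pi \<in> {-N<..<N}" "a \<in> {-N<..<N}"
      using that pi_gt_zero unfolding greaterThanLessThan_iff by linarith+
    have "((\<lambda>a. \<Phi> (a + 2*pi)) has_real_derivative q (a + 2*pi) * 1) (at a)"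
      by (rule DERIV_chain2[where g="\<lambda>a. a + 2*pi", OF der[OF a(1)]]) (auto intro!: derivative_eq_intros)
    then have "(F has_real_derivative q (a + 2*pi) * 1 - q a) (at a)"
      unfolding F_def by (intro DERIV_diff der a(2))
    then show ?thesis using per by simp
  qed
  have N: "N - 2*pi > \<alpha>" "N - 2*pi > 0" "-N < \<alpha>" "-N < 0"
    unfolding N_def using pi_gt_zero by linarith+
  have "F \<alpha> = F 0"
    by (rule DERIV_isconst3[of "-N" "N-2*pi"]) (use N F0 in auto)
  then have "integral {\<alpha>..\<alpha>+2*pi} q = integral {0..2*pi} q"
    using F_eq[of \<alpha>] F_eq[of 0] N by simp
  moreover have "integral {0..2*pi} (\<lambda>t. q (t + \<alpha>)) = integral {\<alpha>..\<alpha>+2*pi} q"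
    using integral_shift_real_ivl[of \<alpha> \<alpha> "\<alpha>+2*pi" q] by simp
  ultimately show ?thesis by simp
qed

lemma norm_integral_half_period_le:
  fixes q :: "real \<Rightarrow> real" and \<phi> :: "real \<Rightarrow> 'a::banach"
  assumes c\<phi>: "continuous_on {0..pi} \<phi>" and cq: "continuous_on UNIV q" and per: "\<And>t. q (t + 2*pi) = q t"
    and bound: "\<And>t. norm (\<phi> t) \<le> (q t + q (-t)) / 2"
  shows "norm (integral {0..pi} \<phi>) \<le> integral {0..2*pi} q / 2"
proof -
  have iq: "q integrable_on {a..b}" for a b
    by (rule integrable_continuous_real) (rule continuous_on_subset[OF cq], auto)
  have iqm: "(\<lambda>t. q (-t)) integrable_on {0..pi}"
    using iq[of "-pi" 0] Henstock_Kurzweil_Integration.integrable_reflect_real[where f=q and a="-pi" and b=0]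
    by simp
  have "norm (integral {0..pi} \<phi>) \<le> integral {0..pi} (\<lambda>t. (q t + q (-t)) / 2)"
  proof (rule integral_norm_bound_integral[OF _ _ bound])
    show "\<phi> integrable_on {0..pi}" by (rule integrable_continuous_real[OF c\<phi>])
    show "(\<lambda>t. (q t + q (-t)) / 2) integrable_on {0..pi}"
      using integrable_add[OF iq iqm] by (intro integrable_on_divide) auto
  qed
  also have "\<dots> = (integral {0..pi} q + integral {0..pi} (\<lambda>t. q (-t))) / 2"
    using iq iqm by (simp add: integral_add integral_divide)
  also have "integral {0..pi} (\<lambda>t. q (-t)) = integral {-pi..0} q"
    using Henstock_Kurzweil_Integration.integral_reflect_real[where f=q and a="-pi" and b=0] by simp
  also have "\<dots> = integral {pi-2*pi..2*pi-2*pi} (\<lambda>x. q (x + 2*pi))"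
    using per by simp
  also have "\<dots> = integral {pi..2*pi} q"
    by (rule integral_shift_real_ivl)
  also have "integral {0..pi} q + integral {pi..2*pi} q = integral {0..2*pi} q"
    using Henstock_Kurzweil_Integration.integral_combine[of 0 pi "2*pi" q] iq by simp
  finally show ?thesis .
qed

text \<open>Cauchy's theorem on the boundary of the upper half disc.\<close>
lemma integral_diameter_eq_semicircle:
  fixes H :: "complex \<Rightarrow> complex"
  assumes hH: "H holomorphic_on ball 0 R" and R: "R > 1"
  shows "integral {-1..1} (\<lambda>x. H (of_real x)) = - integral {0..pi} (\<lambda>t. H (cis t) * \<i> * cis t)"
proof -
  define \<gamma>1 where "\<gamma>1 = linepath (-1::complex) 1"
  define \<gamma>2 where "\<gamma>2 = part_circlepath 0 1 0 pi"
  have v: "valid_path \<gamma>1" "valid_path \<gamma>2" by (auto simp: \<gamma>1_def \<gamma>2_def)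
  have "closed_segment (-1::complex) 1 \<subseteq> cball 0 1"
    by (rule closed_segment_subset) auto
  then have img: "path_image \<gamma>1 \<subseteq> ball 0 R" "path_image \<gamma>2 \<subseteq> ball 0 R"
    using R by (auto simp: \<gamma>1_def \<gamma>2_def path_image_part_circlepath')
  obtain I1 where I1: "(H has_contour_integral I1) \<gamma>1"
    using contour_integrable_holomorphic_simple[OF hH open_ball v(1) img(1)]
    by (auto simp: contour_integrable_on_def)
  obtain I2 where I2: "(H has_contour_integral I2) \<gamma>2"
    using contour_integrable_holomorphic_simple[OF hH open_ball v(2) img(2)]
    by (auto simp: contour_integrable_on_def)
  have fs: "pathfinish \<gamma>1 = pathstart \<gamma>2" "pathfinish \<gamma>2 = pathstart \<gamma>1"
    by (auto simp: \<gamma>1_def \<gamma>2_def)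
  have "(H has_contour_integral 0) (\<gamma>1 +++ \<gamma>2)"
  proof (rule Cauchy_theorem_convex_simple[OF hH convex_ball])
    show "valid_path (\<gamma>1 +++ \<gamma>2)" using v fs by simp
    show "path_image (\<gamma>1 +++ \<gamma>2) \<subseteq> ball 0 R"
      using path_image_join_subset[of \<gamma>1 \<gamma>2] img by blast
    show "pathfinish (\<gamma>1 +++ \<gamma>2) = pathstart (\<gamma>1 +++ \<gamma>2)" using fs by simp
  qed
  then have "I1 + I2 = 0"
    using has_contour_integral_unique[OF has_contour_integral_join[OF I1 I2 v]] by simp
  moreover have "((\<lambda>x. H (of_real x)) has_integral I1) {-1..1}"
    using I1 unfolding \<gamma>1_def by (subst (asm) has_contour_integral_linepath_Reals_iff) auto
  moreover have "((\<lambda>t. H (cis t) * \<i> * cis t) has_integral I2) {0..pi}"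
    using I2 unfolding \<gamma>2_def by (subst (asm) has_contour_integral_part_circlepath_iff) auto
  ultimately show ?thesis by (simp add: integral_unique eq_neg_iff_add_eq_0)
qed

text \<open>
  Apply the half-disc identity to \<open>H z = G z * cnj (G (cnj z))\<close>: on the diameter it equals
  \<open>norm (G x)^2\<close>, on the semicircle its modulus is at most the mean of \<open>norm (G (cis t))^2\<close>
  and \<open>norm (G (cis (-t)))^2\<close>.
\<close>
lemma fejer_riesz_square:
  fixes G :: "complex \<Rightarrow> complex"
  assumes hG: "G holomorphic_on ball 0 R" and R: "R > 1"
  shows "integral {-1..1} (\<lambda>x. norm (G (of_real x))^2) \<le> integral {0..2*pi} (\<lambda>t. norm (G (cis t))^2) / 2"
proof -
  define H where "H z = G z * cnj (G (cnj z))" for z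
  have "G holomorphic_on cnj ` ball 0 R"
    using hG by (rule holomorphic_on_subset) auto
  then have "cnj \<circ> G \<circ> cnj holomorphic_on ball 0 R" by (intro holomorphic_on_compose_cnj_cnj) auto
  then have hH: "H holomorphic_on ball 0 R"
    using hG unfolding H_def by (auto simp: o_def intro!: holomorphic_intros)
  define q where "q t = norm (G (cis t))^2" for t
  define q1 where "q1 x = norm (G (of_real x))^2" for x
  have cG: "continuous_on (ball 0 R) G" using hG holomorphic_on_imp_continuous_on by blast
  have cq: "continuous_on UNIV q" unfolding q_def
    by (intro continuous_intros continuous_on_compose2[OF cG]) (use R in \<open>auto intro!: continuous_intros\<close>)
  have qper: "q (t + 2*pi) = q t" for t unfolding q_def by (simp only: cis_plus_2pi)
  have H_diam: "H (of_real x) = of_real (q1 x)" for x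
    unfolding H_def q1_def by (simp only: complex_cnj_complex_of_real complex_norm_square)
  have H_circ: "norm (H (cis t) * \<i> * cis t) \<le> (q t + q (-t)) / 2" for t
  proof -
    have "norm (H (cis t) * \<i> * cis t) = norm (G (cis t)) * norm (G (cis (-t)))"
      by (simp add: H_def norm_mult cis_cnj)
    also have "\<dots> \<le> (q t + q (-t)) / 2" unfolding q_def
      using sum_squares_bound[of "norm (G (cis t))" "norm (G (cis (-t)))"] by (simp add: power2_eq_square)
    finally show ?thesis .
  qed
  have "continuous_on UNIV (\<lambda>t. H (cis t))"
    by (rule continuous_on_compose2[OF holomorphic_on_imp_continuous_on[OF hH]])
       (use R in \<open>auto intro!: continuous_intros\<close>)
  then have cH: "continuous_on UNIV (\<lambda>t. H (cis t) * \<i> * cis t)"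
    by (intro continuous_intros)
  have cq1: "continuous_on {-1..1} q1" unfolding q1_def
    by (intro continuous_intros continuous_on_compose2[OF cG]) (use R in \<open>auto intro!: continuous_intros\<close>)
  have "integral {-1..1} (\<lambda>x. H (of_real x)) = of_real (integral {-1..1} q1)"
    unfolding H_diam
    by (intro integral_unique has_integral_of_real integrable_integral integrable_continuous_real cq1)
  then have "complex_of_real (integral {-1..1} q1) = - integral {0..pi} (\<lambda>t. H (cis t) * \<i> * cis t)"
    using integral_diameter_eq_semicircle[OF hH R] by simp
  from arg_cong[OF this, of Re]
  have "integral {-1..1} q1 = - Re (integral {0..pi} (\<lambda>t. H (cis t) * \<i> * cis t))"
    by simp
  also have "\<dots> \<le> norm (integral {0..pi} (\<lambda>t. H (cis t) * \<i> * cis t))"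
    using abs_Re_le_cmod[of "integral {0..pi} (\<lambda>t. H (cis t) * \<i> * cis t)"] by linarith
  also have "\<dots> \<le> integral {0..2*pi} q / 2"
    by (rule norm_integral_half_period_le[OF continuous_on_subset[OF cH] cq qper H_circ]) simp
  finally show ?thesis unfolding q_def q1_def .
qed

lemma norm_one_sub_cnj_mult_sq_diff:
  fixes a z :: complex
  shows "(norm (1 - cnj a * z))^2 - (norm (z - a))^2 = (1 - (norm a)^2) * (1 - (norm z)^2)"
  by (simp only: cmod_power2) (simp add: algebra_simps power2_eq_square)

lemma norm_sub_le_norm_one_sub_cnj_mult:
  fixes a z :: complex
  assumes "norm a < 1" "norm z \<le> 1"
  shows "norm (z - a) \<le> norm (1 - cnj a * z)"
proof -
  have "(1 - (norm a)^2) * (1 - (norm z)^2) \<ge> 0"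
    using assms by (intro mult_nonneg_nonneg) (auto simp: power_le_one abs_square_le_1)
  then have "(norm (z - a))^2 \<le> (norm (1 - cnj a * z))^2"
    using norm_one_sub_cnj_mult_sq_diff[of a z] by linarith
  then show ?thesis using power2_le_imp_le by force
qed

lemma norm_sub_eq_norm_one_sub_cnj_mult:
  fixes a z :: complex
  assumes "norm z = 1"
  shows "norm (z - a) = norm (1 - cnj a * z)"
proof -
  have "(norm (z - a))^2 = (norm (1 - cnj a * z))^2"
    using norm_one_sub_cnj_mult_sq_diff[of a z] assms by simp
  then show ?thesis using power2_eq_imp_eq by force
qed

lemma holomorphic_factor_zero_global:
  fixes h :: "complex \<Rightarrow> complex"
  assumes hh: "h holomorphic_on S" and S: "open S" "connected S" and a: "a \<in> S" "h a = 0"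
    and nc: "\<exists>w\<in>S. h w \<noteq> 0"
  obtains q n where "q holomorphic_on S" "n > 0" "q a \<noteq> 0" "\<And>z. z \<in> S \<Longrightarrow> h z = (z - a)^n * q z"
proof -
  define n where "n = nat (zorder h a)"
  define g where "g = zor_poly h a"
  from zorder_exist_zero[OF hh S(1) S(2) a(1) nc] a(2)
  obtain r where zpos: "zorder h a > 0" and r: "r > 0" "cball a r \<subseteq> S" "g holomorphic_on cball a r"
     "\<And>w. w \<in> cball a r \<Longrightarrow> h w = g w * (w - a)^n \<and> g w \<noteq> 0"
    unfolding g_def n_def by auto
  have npos: "n > 0" using zpos by (simp add: n_def)
  define q where "q z = (if z = a then g a else h z / (z - a)^n)" for z
  have hol1: "q holomorphic_on (S - {a})"
  proof (rule holomorphic_transform[of "\<lambda>z. h z / (z - a)^n"])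
    show "(\<lambda>z. h z / (z - a)^n) holomorphic_on S - {a}"
      by (intro holomorphic_intros holomorphic_on_subset[OF hh]) auto
  qed (auto simp: q_def)
  have hol2: "q holomorphic_on ball a r"
  proof (rule holomorphic_transform[of g])
    show "g holomorphic_on ball a r" using r(3) holomorphic_on_subset by fastforce
    show "g x = q x" if "x \<in> ball a r" for x
      using r(4)[of x] that by (cases "x = a") (auto simp: q_def)
  qed
  have "q holomorphic_on ((S - {a}) \<union> ball a r)"
    by (rule holomorphic_on_Un[OF hol1 hol2]) (use S in auto)
  moreover have "(S - {a}) \<union> ball a r = S" using r a by auto
  ultimately have hq: "q holomorphic_on S" by simp
  have qa: "q a \<noteq> 0" using r(4)[of a] r(1) by (simp add: q_def)
  have eq: "h z = (z - a)^n * q z" if "z \<in> S" for z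
    using a(2) npos by (cases "z = a") (auto simp: q_def)
  show ?thesis by (rule that[OF hq npos qa eq])
qed

text \<open>
  Dividing out a zero \<open>a\<close> of the open unit disc by the Blaschke factor \<open>(z - a) / (1 - cnj a * z)\<close>
  leaves the modulus on the unit circle unchanged and does not decrease it inside.
\<close>
lemma divide_out_blaschke_factor:
  fixes h :: "complex \<Rightarrow> complex"
  assumes hh: "h holomorphic_on ball 0 R" and R: "R > 1" and a: "h a = 0" "norm a < 1"
    and nc: "\<exists>w\<in>ball 0 R. h w \<noteq> 0"
  obtains R1 h1 where "1 < R1" "R1 \<le> R" "h1 holomorphic_on ball 0 R1"
    "{z\<in>ball 0 R1. h1 z = 0} \<subseteq> {z\<in>ball 0 R. h z = 0} - {a}"
    "\<And>z. norm z = 1 \<Longrightarrow> norm (h1 z) = norm (h z)"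
    "\<And>z. norm z \<le> 1 \<Longrightarrow> norm (h z) \<le> norm (h1 z)"
proof -
  have aR: "a \<in> ball 0 R" using a R by simp
  obtain q m where hq: "q holomorphic_on ball 0 R" and m: "m > 0" and qa: "q a \<noteq> 0"
    and heq: "\<And>z. z \<in> ball 0 R \<Longrightarrow> h z = (z - a)^m * q z"
    using holomorphic_factor_zero_global[OF hh open_ball connected_ball aR a(1) nc] by blast
  define R1 where "R1 = min R (2 / (1 + norm a))"
  have pos: "0 < 1 + norm a" by (simp add: add_pos_nonneg)
  have "1 < 2 / (1 + norm a)" by (subst less_divide_eq_1_pos[OF pos]) (use a in linarith)
  then have R1: "R1 > 1" "R1 \<le> R" using R by (auto simp: R1_def)
  have fac: "1 - cnj a * z \<noteq> 0" if "z \<in> ball 0 R1" for z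
  proof -
    have "norm a * norm z \<le> norm a * (2 / (1 + norm a))"
      using that by (intro mult_left_mono) (auto simp: R1_def)
    also have "\<dots> < 1"
      by (subst times_divide_eq_right, subst divide_less_eq_1_pos[OF pos]) (use a in linarith)
    finally have "norm (cnj a * z) < 1" by (simp add: norm_mult)
    then show ?thesis by auto
  qed
  define h1 where "h1 z = q z * (1 - cnj a * z)^m" for z
  show ?thesis
  proof (rule that[OF R1])
    show "h1 holomorphic_on ball 0 R1" unfolding h1_def
      using hq R1 by (intro holomorphic_intros) (auto intro: holomorphic_on_subset)
    show "{z\<in>ball 0 R1. h1 z = 0} \<subseteq> {z\<in>ball 0 R. h z = 0} - {a}"
    proof
      fix z assume z: "z \<in> {z\<in>ball 0 R1. h1 z = 0}"
      then have zR: "z \<in> ball 0 R" using R1 by auto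
      have "q z = 0" using z fac[of z] by (auto simp: h1_def)
      then show "z \<in> {z\<in>ball 0 R. h z = 0} - {a}" using qa heq[OF zR] zR by auto
    qed
    have h_eq: "norm (h z) = norm (z - a)^m * norm (q z)" if "norm z \<le> 1" for z
      using heq[of z] that R by (simp add: norm_mult norm_power)
    have h1_eq: "norm (h1 z) = norm (1 - cnj a * z)^m * norm (q z)" for z
      by (simp add: h1_def norm_mult norm_power)
    show "norm (h1 z) = norm (h z)" if "norm z = 1" for z
      using that h_eq h1_eq norm_sub_eq_norm_one_sub_cnj_mult[OF that, of a] by simp
    show "norm (h z) \<le> norm (h1 z)" if "norm z \<le> 1" for z
      unfolding h_eq[OF that] h1_eq
      using norm_sub_le_norm_one_sub_cnj_mult[OF a(2) that] by (intro mult_right_mono power_mono) auto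
  qed
qed

lemma exists_zero_free_majorant:
  fixes h :: "complex \<Rightarrow> complex"
  assumes "h holomorphic_on ball 0 R" "R > 1" "finite {z\<in>ball 0 R. h z = 0}"
    "\<And>z. z \<in> ball 0 R \<Longrightarrow> h z = 0 \<Longrightarrow> norm z < 1"
  shows "\<exists>F R'. R' > 1 \<and> F holomorphic_on ball 0 R' \<and> (\<forall>z\<in>ball 0 R'. F z \<noteq> 0) \<and>
           (\<forall>z. norm z = 1 \<longrightarrow> norm (F z) = norm (h z)) \<and> (\<forall>z. norm z \<le> 1 \<longrightarrow> norm (h z) \<le> norm (F z))"
  using assms
proof (induction "card {z\<in>ball 0 R. h z = 0}" arbitrary: h R rule: less_induct)
  case less
  note hh = less.prems(1) and R = less.prems(2) and fin = less.prems(3) and inside = less.prems(4)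
  show ?case
  proof (cases "\<exists>a\<in>ball 0 R. h a = 0")
    case False
    then show ?thesis using hh R by (intro exI[of _ h] exI[of _ R]) auto
  next
    case True
    then obtain a where aR: "a \<in> ball 0 R" and a: "h a = 0" by blast
    have "(1::complex) \<in> ball 0 R" "h 1 \<noteq> 0" using R inside[of 1] by auto
    then have nc: "\<exists>w\<in>ball 0 R. h w \<noteq> 0" by blast
    obtain R1 h1 where R1: "1 < R1" "R1 \<le> R" and hh1: "h1 holomorphic_on ball 0 R1"
      and Z1: "{z\<in>ball 0 R1. h1 z = 0} \<subseteq> {z\<in>ball 0 R. h z = 0} - {a}"
      and circ: "\<And>z. norm z = 1 \<Longrightarrow> norm (h1 z) = norm (h z)"
      and disc: "\<And>z. norm z \<le> 1 \<Longrightarrow> norm (h z) \<le> norm (h1 z)"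
      using divide_out_blaschke_factor[OF hh R a inside[OF aR a] nc] by blast
    have fin': "finite ({z\<in>ball 0 R. h z = 0} - {a})" using fin by simp
    have fin1: "finite {z\<in>ball 0 R1. h1 z = 0}" by (rule finite_subset[OF Z1 fin'])
    have "card {z\<in>ball 0 R1. h1 z = 0} \<le> card ({z\<in>ball 0 R. h z = 0} - {a})"
      by (rule card_mono[OF fin' Z1])
    also have "\<dots> < card {z\<in>ball 0 R. h z = 0}"
      using aR a by (intro card_Diff1_less[OF fin]) simp
    finally have card1: "card {z\<in>ball 0 R1. h1 z = 0} < card {z\<in>ball 0 R. h z = 0}" .
    have inside1: "norm z < 1" if "z \<in> ball 0 R1" "h1 z = 0" for z
      using Z1 that inside[of z] by auto
    obtain F R' where F: "R' > 1" "F holomorphic_on ball 0 R'" "\<forall>z\<in>ball 0 R'. F z \<noteq> 0"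
        "\<forall>z. norm z = 1 \<longrightarrow> norm (F z) = norm (h1 z)" "\<forall>z. norm z \<le> 1 \<longrightarrow> norm (h1 z) \<le> norm (F z)"
      using less.hyps[OF card1 hh1 R1(1) fin1 inside1] by blast
    have "\<forall>z. norm z = 1 \<longrightarrow> norm (F z) = norm (h z)" using F(4) circ by simp
    moreover have "\<forall>z. norm z \<le> 1 \<longrightarrow> norm (h z) \<le> norm (F z)" using F(5) disc order_trans by blast
    ultimately show ?thesis using F(1-3) by (intro exI[of _ F] exI[of _ R']) auto
  qed
qed

lemma zeros_inside_unit_circle:
  fixes h :: "complex \<Rightarrow> complex"
  assumes hh: "h holomorphic_on ball 0 R" and R: "R > 1" and nz: "\<And>z. norm z = 1 \<Longrightarrow> h z \<noteq> 0"
  obtains R2 where "1 < R2" "R2 \<le> R" "finite {z\<in>ball 0 R2. h z = 0}"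
    "\<And>z. z \<in> ball 0 R2 \<Longrightarrow> h z = 0 \<Longrightarrow> norm z < 1"
proof (cases "h constant_on ball 0 R")
  case True
  then obtain c where c: "\<And>z. z \<in> ball 0 R \<Longrightarrow> h z = c" by (auto simp: constant_on_def)
  have "c \<noteq> 0" using nz[of 1] c[of 1] R by simp
  then have Z: "{z\<in>ball 0 R. h z = 0} = {}" using c by auto
  show ?thesis
  proof (rule that[OF R order_refl])
    show "finite {z\<in>ball 0 R. h z = 0}" unfolding Z by simp
  qed (use Z in blast)
next
  case False
  define R0 where "R0 = (1 + R) / 2"
  have R0: "1 < R0" "R0 < R" using R by (auto simp: R0_def)
  define A where "A = {z\<in>cball 0 R0. h z = 0}"
  have finA: "finite A" unfolding A_def
    by (rule holomorphic_compact_finite_zeros[OF hh open_ball connected_ball compact_cball _ False])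
       (use R0 in auto)
  define R2 where "R2 = Min (insert R0 (norm ` {z\<in>A. 1 \<le> norm z}))"
  have fin2: "finite (insert R0 (norm ` {z\<in>A. 1 \<le> norm z}))" using finA by simp
  have "1 < y" if "y \<in> insert R0 (norm ` {z\<in>A. 1 \<le> norm z})" for y
    using that nz R0 by (force simp: A_def)
  then have R2: "1 < R2" "R2 \<le> R0" unfolding R2_def using fin2 by (auto simp: Min_gr_iff)
  have sub: "{z\<in>ball 0 R2. h z = 0} \<subseteq> A" using R2 by (auto simp: A_def)
  have "norm z < 1" if "z \<in> ball 0 R2" "h z = 0" for z
  proof (rule ccontr)
    assume "\<not> norm z < 1"
    then have "norm z \<in> insert R0 (norm ` {z\<in>A. 1 \<le> norm z})" using sub that by auto
    then have "R2 \<le> norm z" unfolding R2_def by (rule Min_le[OF fin2])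
    then show False using that by simp
  qed
  then show ?thesis using that[OF R2(1)] R2(2) R0 finite_subset[OF sub finA] by simp
qed

text \<open>
  Fejer-Riesz inequality. Replace \<open>h\<close> by a zero-free majorant with the same modulus on the
  circle and apply the quadratic version to its holomorphic square root.
\<close>
lemma fejer_riesz_inequality:
  fixes h :: "complex \<Rightarrow> complex"
  assumes hh: "h holomorphic_on ball 0 R" and R: "R > 1" and nz: "\<And>z. norm z = 1 \<Longrightarrow> h z \<noteq> 0"
  shows "integral {-1..1} (\<lambda>x. norm (h (of_real x))) \<le> integral {0..2*pi} (\<lambda>t. norm (h (cis t))) / 2"
proof -
  obtain R2 where R2: "1 < R2" "R2 \<le> R" and fin: "finite {z\<in>ball 0 R2. h z = 0}"
    and inside: "\<And>z. z \<in> ball 0 R2 \<Longrightarrow> h z = 0 \<Longrightarrow> norm z < 1"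
    using zeros_inside_unit_circle[OF hh R nz] by blast
  have hh2: "h holomorphic_on ball 0 R2" using hh R2 by (auto intro: holomorphic_on_subset)
  obtain F R' where R': "R' > 1" and hF: "F holomorphic_on ball 0 R'" and Fnz: "\<forall>z\<in>ball 0 R'. F z \<noteq> 0"
    and Feq: "\<forall>z. norm z = 1 \<longrightarrow> norm (F z) = norm (h z)"
    and Fle: "\<forall>z. norm z \<le> 1 \<longrightarrow> norm (h z) \<le> norm (F z)"
    using exists_zero_free_majorant[OF hh2 R2(1) fin inside] by blast
  obtain G where hG: "G holomorphic_on ball 0 R'" and FG: "\<And>z. z \<in> ball 0 R' \<Longrightarrow> F z = G z ^ 2"
    using contractible_imp_holomorphic_sqrt[OF hF convex_imp_contractible[OF convex_ball]] Fnz by blast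
  have cG: "continuous_on (ball 0 R') G" using hG holomorphic_on_imp_continuous_on by blast
  have ch: "continuous_on (ball 0 R) h" using hh holomorphic_on_imp_continuous_on by blast
  have i1: "(\<lambda>x. norm (h (of_real x))) integrable_on {-1..1}"
    by (intro integrable_continuous_real continuous_intros continuous_on_compose2[OF ch])
       (use R in \<open>auto intro!: continuous_intros\<close>)
  have i2: "(\<lambda>x. norm (G (of_real x))^2) integrable_on {-1..1}"
    by (intro integrable_continuous_real continuous_intros continuous_on_compose2[OF cG])
       (use R' in \<open>auto intro!: continuous_intros\<close>)
  have "integral {-1..1} (\<lambda>x. norm (h (of_real x))) \<le> integral {-1..1} (\<lambda>x. norm (G (of_real x))^2)"
  proof (rule integral_le[OF i1 i2])
    fix x :: real assume "x \<in> {-1..1}"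
    then have "norm (of_real x :: complex) \<le> 1" by auto
    moreover from this have "(of_real x :: complex) \<in> ball 0 R'" using R' by simp
    ultimately show "norm (h (of_real x)) \<le> norm (G (of_real x))^2"
      using Fle FG by (metis norm_power)
  qed
  also have "\<dots> \<le> integral {0..2*pi} (\<lambda>t. norm (G (cis t))^2) / 2"
    by (rule fejer_riesz_square[OF hG R'])
  also have "integral {0..2*pi} (\<lambda>t. norm (G (cis t))^2) = integral {0..2*pi} (\<lambda>t. norm (h (cis t)))"
  proof (rule integral_cong)
    fix t :: real
    have "cis t \<in> ball 0 R'" using R' by simp
    then show "norm (G (cis t))^2 = norm (h (cis t))" using Feq FG by (simp add: norm_power)
  qed
  finally show ?thesis .
qed

section \<open>Functions in \<open>S2p\<close> are bounded\<close>

lemma exists_zero_free_circle: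
  fixes g :: "complex \<Rightarrow> complex"
  assumes hg: "g holomorphic_on ball 0 1" and z0: "z0 \<in> ball 0 1" "g z0 \<noteq> 0" and \<rho>: "0 \<le> \<rho>" "\<rho> < 1"
  obtains s where "\<rho> < s" "s < 1" "\<And>z. norm z = s \<Longrightarrow> g z \<noteq> 0"
proof -
  define s' where "s' = (1 + \<rho>) / 2"
  have s': "\<rho> < s'" "s' < 1" using \<rho> by (auto simp: s'_def)
  have finZ: "finite {z\<in>cball 0 s'. g z = 0}"
  proof (cases "g constant_on ball 0 1")
    case True
    then have Z: "{z\<in>cball 0 s'. g z = 0} = {}"
      using z0 s' by (auto simp: constant_on_def)
    show ?thesis unfolding Z by simp
  next
    case False
    show ?thesis
      by (rule holomorphic_compact_finite_zeros[OF hg open_ball connected_ball compact_cball _ False])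
         (use s' in auto)
  qed
  have "infinite ({\<rho><..<s'} - norm ` {z\<in>cball 0 s'. g z = 0})"
    by (rule Diff_infinite_finite) (use finZ s' in auto)
  then obtain s where s: "s \<in> {\<rho><..<s'}" "s \<notin> norm ` {z\<in>cball 0 s'. g z = 0}"
    using infinite_imp_nonempty by blast
  show ?thesis
  proof (rule that)
    show "\<rho> < s" "s < 1" using s s' by auto
    show "g z \<noteq> 0" if "norm z = s" for z using s that by auto
  qed
qed

lemma integral_norm_rotated_circle:
  fixes g :: "complex \<Rightarrow> complex"
  assumes cg: "continuous_on (ball 0 1) g" and w: "norm w = 1" and s: "0 \<le> s" "s < 1"
  shows "integral {0..2*pi} (\<lambda>t. norm (g (of_real s * w * cis t))) = 2 * pi * circle_avg 1 g s"
proof -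
  define q where "q t = norm (g (of_real s * cis t))" for t
  have cq: "continuous_on UNIV q" unfolding q_def
    by (intro continuous_intros continuous_on_compose2[OF cg]) (use s in \<open>auto simp: norm_mult intro!: continuous_intros\<close>)
  have qper: "q (t + 2*pi) = q t" for t unfolding q_def by (simp only: cis_plus_2pi)
  have "w \<noteq> 0" using w by auto
  then have "w = cis (Arg w)" using w cis_Arg[of w] by (simp add: sgn_div_norm)
  then have "w * cis t = cis (t + Arg w)" for t by (metis cis_mult add.commute)
  then have "integral {0..2*pi} (\<lambda>t. norm (g (of_real s * w * cis t))) = integral {0..2*pi} (\<lambda>t. q (t + Arg w))"
    by (simp add: q_def mult.assoc)
  also have "\<dots> = integral {0..2*pi} q" by (rule integral_periodic_shift[OF cq qper])
  also have "\<dots> = 2 * pi * circle_avg 1 g s" unfolding circle_avg_def q_def by simp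
  finally show ?thesis .
qed

lemma integral_norm_ray_rescale:
  fixes g :: "complex \<Rightarrow> complex"
  assumes s: "s > 0"
  shows "integral {0..\<rho>} (\<lambda>t. norm (g (of_real t * w)))
    = s * integral {0..\<rho>/s} (\<lambda>x. norm (g (of_real s * w * of_real x)))"
proof -
  have "integral ((\<lambda>x. x / s) ` {0..\<rho>}) (\<lambda>x. norm (g (of_real (s * x) * w)))
      = (1 / \<bar>s\<bar>) *\<^sub>R integral {0..\<rho>} (\<lambda>t. norm (g (of_real t * w)))"
    by (rule integral_stretch_real[where f="\<lambda>t. norm (g (of_real t * w))"]) (use s in auto)
  moreover have "(\<lambda>x. norm (g (of_real (s * x) * w))) = (\<lambda>x. norm (g (of_real s * w * of_real x)))"
    by (auto simp: fun_eq_iff mult.commute mult.left_commute)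
  ultimately show ?thesis using s by (simp add: field_simps)
qed

text \<open>
  Hardy's inequality on a radius: after rescaling to a circle of radius \<open>s\<close> on which \<open>g\<close>
  has no zeros, this is the Fejer-Riesz inequality for \<open>u \<mapsto> g (s w u)\<close>.
\<close>
lemma integral_norm_ray_le:
  fixes g :: "complex \<Rightarrow> complex"
  assumes hg: "g holomorphic_on ball 0 1" and M: "\<And>r. r \<in> {0<..<1} \<Longrightarrow> circle_avg 1 g r \<le> M"
    and w: "norm w = 1" and \<rho>: "0 \<le> \<rho>" "\<rho> < 1"
  shows "integral {0..\<rho>} (\<lambda>t. norm (g (of_real t * w))) \<le> pi * M"
proof (cases "\<forall>z\<in>ball 0 1. g z = 0")
  case True
  have "M \<ge> 0" using M[of "1/2"] circle_avg_nonneg[of 1 g "1/2"] by simp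
  moreover have "integral {0..\<rho>} (\<lambda>t. norm (g (of_real t * w))) = integral {0..\<rho>} (\<lambda>t. 0::real)"
    by (rule integral_cong) (use True \<rho> w in \<open>auto simp: norm_mult\<close>)
  ultimately show ?thesis by simp
next
  case False
  then obtain z0 where z0: "z0 \<in> ball 0 1" "g z0 \<noteq> 0" by blast
  obtain s where s: "\<rho> < s" "s < 1" and gnz: "\<And>z. norm z = s \<Longrightarrow> g z \<noteq> 0"
    using exists_zero_free_circle[OF hg z0 \<rho>] by blast
  have s0: "s > 0" using s \<rho> by simp
  define h where "h u = g (of_real s * w * u)" for u
  have R: "1 / s > 1" using s s0 by (simp add: field_simps)
  have "(\<lambda>u. of_real s * w * u) ` ball 0 (1/s) \<subseteq> ball 0 1"
    using s0 w by (auto simp: norm_mult field_simps)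
  then have hh: "h holomorphic_on ball 0 (1/s)" unfolding h_def
    by (intro holomorphic_on_compose_gen[OF _ hg, unfolded o_def]) (auto intro!: holomorphic_intros)
  have hnz: "h u \<noteq> 0" if "norm u = 1" for u
    using gnz[of "of_real s * w * u"] that w s0 by (simp add: h_def norm_mult)
  have cg: "continuous_on (ball 0 1) g" using hg holomorphic_on_imp_continuous_on by blast
  have "integral {-1..1} (\<lambda>x. norm (h (of_real x))) \<le> integral {0..2*pi} (\<lambda>t. norm (h (cis t))) / 2"
    by (rule fejer_riesz_inequality[OF hh R hnz])
  also have "\<dots> = pi * circle_avg 1 g s"
    using integral_norm_rotated_circle[OF cg w _ s(2)] s0 by (simp add: h_def)
  also have "\<dots> \<le> pi * M" using M[of s] s s0 by simp
  finally have fr: "integral {-1..1} (\<lambda>x. norm (h (of_real x))) \<le> pi * M" .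
  have ch: "continuous_on (ball 0 (1/s)) h" using hh holomorphic_on_imp_continuous_on by blast
  have ih: "(\<lambda>x. norm (h (of_real x))) integrable_on {a..b}" if "-1 \<le> a" "b \<le> 1" for a b
    by (intro integrable_continuous_real continuous_intros continuous_on_compose2[OF ch])
       (use that R in \<open>auto intro!: continuous_intros\<close>)
  have \<rho>s: "\<rho> / s \<le> 1" using s s0 by simp
  have "integral {0..\<rho>} (\<lambda>t. norm (g (of_real t * w))) = s * integral {0..\<rho>/s} (\<lambda>x. norm (h (of_real x)))"
    using integral_norm_ray_rescale[OF s0, where g=g and w=w and \<rho>=\<rho>] by (simp add: h_def)
  also have "\<dots> \<le> 1 * integral {0..\<rho>/s} (\<lambda>x. norm (h (of_real x)))"
    using s s0 \<rho> \<rho>s by (intro mult_right_mono integral_nonneg ih) auto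
  also have "\<dots> \<le> integral {-1..1} (\<lambda>x. norm (h (of_real x)))"
    using \<rho>s s0 \<rho> by (simp, intro integral_subset_le ih) auto
  finally show ?thesis using fr by simp
qed

lemma has_integral_deriv_ray:
  assumes hF: "F holomorphic_on ball 0 1" and w: "norm w = 1" and \<rho>: "0 \<le> \<rho>" "\<rho> < 1"
  shows "((\<lambda>t. w * deriv F (of_real t * w)) has_integral (F (of_real \<rho> * w) - F 0)) {0..\<rho>}"
proof -
  have "((\<lambda>t. F (of_real t * w)) has_vector_derivative (w * deriv F (of_real x * w))) (at x within {0..\<rho>})"
    if x: "x \<in> {0..\<rho>}" for x
  proof -
    have "of_real x * w \<in> ball 0 1" using x \<rho> w by (auto simp: norm_mult)
    then have "(F has_field_derivative deriv F (of_real x * w)) (at (of_real x * w))"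
      by (rule holomorphic_derivI[OF hF open_ball])
    moreover have "((\<lambda>t. of_real t * w) has_vector_derivative w) (at x)"
      by (rule has_vector_derivative_real_field) (auto intro!: derivative_eq_intros)
    ultimately have "((F \<circ> (\<lambda>t. of_real t * w)) has_vector_derivative (w * deriv F (of_real x * w))) (at x)"
      using field_vector_diff_chain_at by blast
    then show ?thesis by (auto simp: o_def intro: has_vector_derivative_at_within)
  qed
  from fundamental_theorem_of_calculus[OF \<rho>(1) this] show ?thesis by simp
qed

lemma norm_diff_le_integral_deriv_ray:
  assumes hF: "F holomorphic_on ball 0 1" and w: "norm w = 1" and \<rho>: "0 \<le> \<rho>" "\<rho> < 1"
  shows "norm (F (of_real \<rho> * w) - F 0) \<le> integral {0..\<rho>} (\<lambda>t. norm (deriv F (of_real t * w)))"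
proof -
  have "deriv F holomorphic_on ball 0 1" using hF by (auto intro!: holomorphic_deriv)
  then have c: "continuous_on (ball 0 1) (deriv F)" using holomorphic_on_imp_continuous_on by blast
  have i: "(\<lambda>t. norm (deriv F (of_real t * w))) integrable_on {0..\<rho>}"
    by (intro integrable_continuous_real continuous_intros continuous_on_compose2[OF c])
       (use \<rho> w in \<open>auto simp: norm_mult intro!: continuous_intros\<close>)
  note h = has_integral_deriv_ray[OF hF w \<rho>]
  have "norm (integral {0..\<rho>} (\<lambda>t. w * deriv F (of_real t * w)))
      \<le> integral {0..\<rho>} (\<lambda>t. norm (deriv F (of_real t * w)))"
    by (rule integral_norm_bound_integral[OF has_integral_integrable[OF h] i]) (simp add: norm_mult w)
  then show ?thesis using integral_unique[OF h] by simp
qed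

lemma norm_le_if_circle_avg_deriv_le:
  assumes hF: "F holomorphic_on ball 0 1" and M: "\<And>r. r \<in> {0<..<1} \<Longrightarrow> circle_avg 1 (deriv F) r \<le> M"
    and z: "z \<in> ball 0 1"
  shows "norm (F z) \<le> norm (F 0) + pi * M"
proof (cases "z = 0")
  case True
  have "M \<ge> 0" using M[of "1/2"] circle_avg_nonneg[of 1 "deriv F" "1/2"] by simp
  then show ?thesis using True by simp
next
  case False
  define w where "w = z / of_real (norm z)"
  have w: "norm w = 1" using False by (simp add: w_def norm_divide)
  have zw: "z = of_real (norm z) * w" using False by (simp add: w_def)
  have hF': "deriv F holomorphic_on ball 0 1" using hF by (auto intro!: holomorphic_deriv)
  have nz: "0 \<le> norm z" "norm z < 1" using z by auto
  have "norm (F z - F 0) \<le> integral {0..norm z} (\<lambda>t. norm (deriv F (of_real t * w)))"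
    using norm_diff_le_integral_deriv_ray[OF hF w nz] zw by simp
  also have "\<dots> \<le> pi * M"
    by (rule integral_norm_ray_le[OF hF' M w nz])
  finally have "norm (F z - F 0) \<le> pi * M" .
  then show ?thesis using norm_triangle_ineq2[of "F z" "F 0"] by simp
qed

lemma norm_le_if_deriv_le:
  assumes hf: "f holomorphic_on ball 0 1" and B: "\<And>u. u \<in> ball 0 1 \<Longrightarrow> norm (deriv f u) \<le> B"
    and z: "z \<in> ball 0 1"
  shows "norm (f z) \<le> norm (f 0) + B"
proof -
  have "norm (f z - f 0) \<le> B * norm (z - 0)"
    by (rule field_differentiable_bound[of "ball 0 1" f "deriv f" B z 0])
       (use z B holomorphic_derivI[OF hf open_ball] in auto)
  also have "\<dots> \<le> B * 1"
    using z order_trans[OF norm_ge_zero B[of 0]] by (intro mult_left_mono) auto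
  finally show ?thesis using norm_triangle_ineq2[of "f z" "f 0"] by simp
qed

lemma S2p_holomorphic:
  assumes "f \<in> S2p p"
  shows "f holomorphic_on ball 0 1" "deriv f holomorphic_on ball 0 1"
    "deriv (deriv f) holomorphic_on ball 0 1" "deriv (deriv f) \<in> hardy p"
  using assms by (auto simp: S2p_def intro!: holomorphic_deriv)

lemma const_one_in_S2p:
  assumes "p > 0"
  shows "(\<lambda>z. 1) \<in> S2p p"
proof -
  have "(\<lambda>z. 0) \<in> hardy p"
    using assms by (auto simp: hardy_iff_circle_avg_bounded circle_avg_def)
  then show ?thesis by (simp add: S2p_def)
qed

lemma S2p_norm_nonneg: "S2p_norm p f \<ge> 0"
  by (simp add: S2p_norm_def hardy_norm_nonneg)

lemma norm_deriv_le_S2p: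
  assumes p: "p \<ge> 1" and f: "f \<in> S2p p" and z: "z \<in> ball 0 1"
  shows "norm (deriv f z) \<le> norm (deriv f 0) + 2 * pi * hardy_norm p (deriv (deriv f))"
  using norm_le_if_circle_avg_deriv_le[OF S2p_holomorphic(2)[OF f]
      circle_avg_1_le_hardy_norm[OF p S2p_holomorphic(4)[OF f]] z]
  by (simp add: mult.assoc)

lemma S2p_bounded:
  assumes p: "p \<ge> 1" and f: "f \<in> S2p p" and z: "z \<in> ball 0 1"
  shows "norm (f z) \<le> 2 * pi * S2p_norm p f" "norm (deriv f z) \<le> 2 * pi * S2p_norm p f"
proof -
  let ?N = "norm (deriv f 0) + 2 * pi * hardy_norm p (deriv (deriv f))"
  have le: "x \<le> 2 * pi * x" if "x \<ge> 0" for x :: real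
    using that pi_gt3 by (simp add: mult_le_cancel_right1)
  have N0: "norm (f 0) + ?N \<le> 2 * pi * S2p_norm p f"
    using le[of "norm (f 0)"] le[of "norm (deriv f 0)"] by (simp add: S2p_norm_def algebra_simps)
  have "norm (f z) \<le> norm (f 0) + ?N"
    by (rule norm_le_if_deriv_le[OF S2p_holomorphic(1)[OF f] norm_deriv_le_S2p[OF p f] z])
  then show "norm (f z) \<le> 2 * pi * S2p_norm p f" using N0 by linarith
  show "norm (deriv f z) \<le> 2 * pi * S2p_norm p f"
    using norm_deriv_le_S2p[OF p f z] N0 norm_ge_zero[of "f 0"] by linarith
qed

section \<open>Multiplication on \<open>S2p\<close>\<close>

lemma deriv2_mult_holomorphic:
  assumes u: "u holomorphic_on S" and v: "v holomorphic_on S" and S: "open S" and z: "z \<in> S"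
  shows "deriv (deriv (\<lambda>z. u z * v z)) z =
    deriv (deriv u) z * v z + 2 * deriv u z * deriv v z + u z * deriv (deriv v) z"
proof -
  have u': "deriv u holomorphic_on S" and v': "deriv v holomorphic_on S"
    using u v S by (auto intro!: holomorphic_deriv)
  have diff: "f field_differentiable at x" if "f holomorphic_on S" "x \<in> S" for f x
    using that S holomorphic_on_imp_differentiable_at by blast
  have "eventually (\<lambda>x. x \<in> S) (nhds z)" using S z by (rule eventually_nhds_in_open)
  then have "eventually (\<lambda>x. deriv (\<lambda>z. u z * v z) x = u x * deriv v x + deriv u x * v x) (nhds z)"
    by eventually_elim (use diff u v in simp)
  then have "deriv (deriv (\<lambda>z. u z * v z)) z = deriv (\<lambda>x. u x * deriv v x + deriv u x * v x) z"
    by (rule deriv_cong_ev) simp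
  also have "\<dots> = deriv (deriv u) z * v z + 2 * deriv u z * deriv v z + u z * deriv (deriv v) z"
    using diff[OF u z] diff[OF v z] diff[OF u' z] diff[OF v' z]
    by (simp add: field_differentiable_mult algebra_simps)
  finally show ?thesis .
qed

lemma norm_deriv2_mult_le_S2p:
  assumes p: "p \<ge> 1" and \<psi>: "\<psi> \<in> S2p p" and f: "f \<in> S2p p" and z: "z \<in> ball 0 1"
  shows "norm (deriv (deriv (\<lambda>z. \<psi> z * f z)) z) \<le>
           (2 * pi * S2p_norm p f) * norm (deriv (deriv \<psi>) z) + (2 * pi * S2p_norm p \<psi>) * norm (deriv (deriv f) z)
           + 2 * (2 * pi * S2p_norm p \<psi>) * (2 * pi * S2p_norm p f)"
proof -
  note b\<psi> = S2p_bounded[OF p \<psi> z] and bf = S2p_bounded[OF p f z]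
  have "norm (deriv (deriv (\<lambda>z. \<psi> z * f z)) z) \<le>
      norm (deriv (deriv \<psi>) z) * norm (f z) + 2 * (norm (deriv \<psi> z) * norm (deriv f z))
      + norm (\<psi> z) * norm (deriv (deriv f) z)"
    unfolding deriv2_mult_holomorphic[OF S2p_holomorphic(1)[OF \<psi>] S2p_holomorphic(1)[OF f] open_ball z]
    using norm_triangle_ineq[of "deriv (deriv \<psi>) z * f z + 2 * deriv \<psi> z * deriv f z" "\<psi> z * deriv (deriv f) z"]
      norm_triangle_ineq[of "deriv (deriv \<psi>) z * f z" "2 * deriv \<psi> z * deriv f z"]
    by (simp add: norm_mult)
  also have "\<dots> \<le> norm (deriv (deriv \<psi>) z) * (2 * pi * S2p_norm p f)
      + 2 * ((2 * pi * S2p_norm p \<psi>) * (2 * pi * S2p_norm p f))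
      + (2 * pi * S2p_norm p \<psi>) * norm (deriv (deriv f) z)"
    using b\<psi> bf S2p_norm_nonneg[of p \<psi>] by (intro add_mono mult_mono mult_left_mono) auto
  finally show ?thesis by (simp add: algebra_simps)
qed

lemma deriv2_mult_hardy_S2p:
  assumes p: "p \<ge> 1" and \<psi>: "\<psi> \<in> S2p p" and f: "f \<in> S2p p"
  defines "K \<equiv> 2 * pi * S2p_norm p \<psi>"
  shows "deriv (deriv (\<lambda>z. \<psi> z * f z)) \<in> hardy p"
    "hardy_norm p (deriv (deriv (\<lambda>z. \<psi> z * f z)))
       \<le> 3 powr (1 + 1/p) * (2 * pi * hardy_norm p (deriv (deriv \<psi>)) + K + 4 * pi * K) * S2p_norm p f"
proof -
  have p0: "p > 0" using p by simp
  define nf where "nf = S2p_norm p f"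
  have nf0: "nf \<ge> 0" and K0: "K \<ge> 0" by (simp_all add: nf_def K_def S2p_norm_nonneg)
  define D where "D = deriv (deriv (\<lambda>z. \<psi> z * f z))"
  have "(\<lambda>z. \<psi> z * f z) holomorphic_on ball 0 1"
    using S2p_holomorphic(1)[OF \<psi>] S2p_holomorphic(1)[OF f] by (intro holomorphic_intros)
  then have hD: "D holomorphic_on ball 0 1" unfolding D_def by (intro holomorphic_deriv) auto
  have pw: "norm (D z) \<le> 2 * pi * nf * norm (deriv (deriv \<psi>) z) + K * norm (deriv (deriv f) z) + 2 * K * (2 * pi * nf)"
    if "z \<in> ball 0 1" for z
    using norm_deriv2_mult_le_S2p[OF p \<psi> f that] by (simp add: D_def K_def nf_def)
  note D_le = hardy_norm_le_pointwise[OF p0 hD S2p_holomorphic(4)[OF \<psi>] S2p_holomorphic(4)[OF f] _ K0 _ pw]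
  show "D \<in> hardy p" using D_le(1) nf0 K0 by simp
  have "K * hardy_norm p (deriv (deriv f)) \<le> K * nf"
    using K0 by (intro mult_left_mono) (auto simp: nf_def S2p_norm_def)
  then have S_le: "2 * pi * nf * hardy_norm p (deriv (deriv \<psi>)) + K * hardy_norm p (deriv (deriv f))
      + 2 * K * (2 * pi * nf) \<le> (2 * pi * hardy_norm p (deriv (deriv \<psi>)) + K + 4 * pi * K) * nf"
    by (simp add: algebra_simps)
  have "hardy_norm p D \<le> 3 powr (1 + 1/p) * (2 * pi * nf * hardy_norm p (deriv (deriv \<psi>))
      + K * hardy_norm p (deriv (deriv f)) + 2 * K * (2 * pi * nf))"
    using D_le(2) nf0 K0 by simp
  also have "\<dots> \<le> 3 powr (1 + 1/p) * ((2 * pi * hardy_norm p (deriv (deriv \<psi>)) + K + 4 * pi * K) * nf)"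
    by (rule mult_left_mono[OF S_le]) simp
  finally show "hardy_norm p D \<le> 3 powr (1 + 1/p) * (2 * pi * hardy_norm p (deriv (deriv \<psi>)) + K + 4 * pi * K) * S2p_norm p f"
    by (simp only: mult.assoc nf_def)
qed

lemma norm_mult_at_0_le_S2p:
  assumes p: "p \<ge> 1" and \<psi>: "\<psi> \<in> S2p p" and f: "f \<in> S2p p"
  shows "norm (\<psi> 0 * f 0) + norm (deriv (\<lambda>z. \<psi> z * f z) 0) \<le> 3 * (2 * pi * S2p_norm p \<psi>) * S2p_norm p f"
proof -
  define K where "K = 2 * pi * S2p_norm p \<psi>"
  define nf where "nf = S2p_norm p f"
  have K0: "K \<ge> 0" by (simp add: K_def S2p_norm_nonneg)
  have "deriv (\<lambda>z. \<psi> z * f z) 0 = \<psi> 0 * deriv f 0 + deriv \<psi> 0 * f 0"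
    using S2p_holomorphic(1)[OF \<psi>] S2p_holomorphic(1)[OF f]
    by (intro deriv_mult) (auto intro: holomorphic_on_imp_differentiable_at)
  then have tri: "norm (deriv (\<lambda>z. \<psi> z * f z) 0) \<le> norm (\<psi> 0 * deriv f 0) + norm (deriv \<psi> 0 * f 0)"
    using norm_triangle_ineq by simp
  have "norm (\<psi> 0) \<le> K" "norm (deriv \<psi> 0) \<le> K" using S2p_bounded[OF p \<psi>] by (auto simp: K_def)
  moreover have "norm (f 0) \<le> nf" "norm (deriv f 0) \<le> nf"
    by (auto simp: nf_def S2p_norm_def hardy_norm_nonneg)
  ultimately have "norm (\<psi> 0 * f 0) \<le> K * nf" "norm (\<psi> 0 * deriv f 0) \<le> K * nf"
    "norm (deriv \<psi> 0 * f 0) \<le> K * nf"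
    using K0 by (auto simp: norm_mult intro: mult_mono)
  with tri show ?thesis unfolding K_def nf_def by linarith
qed

lemma bounded_mult_op_S2p:
  assumes p: "p \<ge> 1" and \<psi>: "\<psi> \<in> S2p p"
  shows "bounded_mult_op (S2p p) (S2p_norm p) \<psi>"
proof -
  define K where "K = 2 * pi * S2p_norm p \<psi>"
  define C where "C = 3 * K + 3 powr (1 + 1/p) * (2 * pi * hardy_norm p (deriv (deriv \<psi>)) + K + 4 * pi * K)"
  have "(\<lambda>z. \<psi> z * f z) \<in> S2p p \<and> S2p_norm p (\<lambda>z. \<psi> z * f z) \<le> C * S2p_norm p f"
    if f: "f \<in> S2p p" for f
  proof
    show "(\<lambda>z. \<psi> z * f z) \<in> S2p p"
      using S2p_holomorphic(1)[OF \<psi>] S2p_holomorphic(1)[OF f] deriv2_mult_hardy_S2p(1)[OF p \<psi> f]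
      by (simp add: S2p_def holomorphic_intros)
    show "S2p_norm p (\<lambda>z. \<psi> z * f z) \<le> C * S2p_norm p f"
      using deriv2_mult_hardy_S2p(2)[OF p \<psi> f] norm_mult_at_0_le_S2p[OF p \<psi> f]
      unfolding S2p_norm_def[of p "\<lambda>z. \<psi> z * f z"] C_def K_def by (simp add: algebra_simps)
  qed
  then show ?thesis unfolding bounded_mult_op_def by blast
qed

section \<open>Radial limits and Poisson integrals\<close>

lemma tendsto_cutoff_at_1:
  fixes h :: "real \<Rightarrow> 'a::real_normed_vector"
  assumes slim: "s \<longlonglongrightarrow> 1" and s: "\<And>k. s k < 1" and t: "t \<in> {0..1}"
  shows "(\<lambda>k. if t \<in> {0..s k} then h t else 0) \<longlonglongrightarrow> (if t < 1 then h t else 0)"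
proof (cases "t < 1")
  case True
  have "eventually (\<lambda>k. t < s k) sequentially" using order_tendstoD(1)[OF slim True] .
  then have "eventually (\<lambda>k. (if t \<in> {0..s k} then h t else 0) = h t) sequentially"
    by eventually_elim (use t in auto)
  then show ?thesis using True by (simp add: tendsto_eventually)
next
  case False
  then have "(if t \<in> {0..s k} then h t else 0) = 0" for k using s[of k] t by auto
  then show ?thesis using False by simp
qed

text \<open>First the norm is integrable by monotone convergence, then the integrand by dominated convergence.\<close>
lemma integrable_on_01_if_bounded_partial_integrals:
  fixes \<phi> :: "real \<Rightarrow> 'a::euclidean_space"
  assumes c: "\<And>\<rho>. \<rho> < 1 \<Longrightarrow> continuous_on {0..\<rho>} \<phi>"
    and B: "\<And>\<rho>. 0 \<le> \<rho> \<Longrightarrow> \<rho> < 1 \<Longrightarrow> integral {0..\<rho>} (\<lambda>t. norm (\<phi> t)) \<le> B"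
  shows "(\<lambda>t. if t < 1 then \<phi> t else 0) integrable_on {0..1}"
proof -
  define s where "s k = 1 - 1 / (real k + 2)" for k :: nat
  have s: "0 \<le> s k" "s k < 1" "s k \<le> s (Suc k)" for k by (auto simp: s_def field_simps)
  have "(\<lambda>k. 1 / (real k + 2)) \<longlonglongrightarrow> 0" by real_asymp
  from tendsto_diff[OF tendsto_const this, of 1] have slim: "s \<longlonglongrightarrow> 1" unfolding s_def by simp
  note cut = tendsto_cutoff_at_1[OF slim s(2)]
  have cn: "continuous_on {0..\<rho>} (\<lambda>t. norm (\<phi> t))" if "\<rho> < 1" for \<rho>
    using c[OF that] by (intro continuous_intros)
  have int_norm: "(\<lambda>t. if t \<in> {0..s k} then norm (\<phi> t) else 0) integrable_on {0..1}" for k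
    unfolding integrable_restrict_Int using s[of k]
    by (auto intro!: integrable_continuous_real cn simp: Int_absorb2)
  have int_\<phi>: "(\<lambda>t. if t \<in> {0..s k} then \<phi> t else 0) integrable_on {0..1}" for k
    unfolding integrable_restrict_Int using s[of k]
    by (auto intro!: integrable_continuous_real c simp: Int_absorb2)
  have "(\<lambda>t. if t < 1 then norm (\<phi> t) else 0) integrable_on {0..1}"
  proof (rule conjunct1[OF monotone_convergence_increasing[OF int_norm _ cut[of _ "\<lambda>t. norm (\<phi> t)"]]])
    show "(if t \<in> {0..s k} then norm (\<phi> t) else 0) \<le> (if t \<in> {0..s (Suc k)} then norm (\<phi> t) else 0)"
      for k t using s[of k] by auto
    have "norm (integral {0..1} (\<lambda>t. if t \<in> {0..s k} then norm (\<phi> t) else 0)) \<le> B" for k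
    proof -
      have "integral {0..1} (\<lambda>t. if t \<in> {0..s k} then norm (\<phi> t) else 0) = integral {0..s k} (\<lambda>t. norm (\<phi> t))"
        unfolding integral_restrict_Int using s[of k] by (simp add: Int_absorb2)
      moreover have "integral {0..s k} (\<lambda>t. norm (\<phi> t)) \<ge> 0"
        by (intro integral_nonneg integrable_continuous_real cn s) auto
      ultimately show ?thesis using B[OF s(1,2)] by simp
    qed
    then show "bounded (range (\<lambda>k. integral {0..1} (\<lambda>t. if t \<in> {0..s k} then norm (\<phi> t) else 0)))"
      unfolding bounded_iff by blast
  qed
  then show ?thesis
  proof (rule dominated_convergence(1)[OF int_\<phi> _ _ cut[of _ \<phi>]])
    show "norm (if t \<in> {0..s k} then \<phi> t else 0) \<le> (if t < 1 then norm (\<phi> t) else 0)"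
      if "t \<in> {0..1}" for k t using s[of k] that by auto
  qed
qed

lemma radial_limit_exists:
  fixes F :: "complex \<Rightarrow> complex"
  assumes hF: "F holomorphic_on ball 0 1" and w: "norm w = 1"
    and B: "\<And>\<rho>. 0 \<le> \<rho> \<Longrightarrow> \<rho> < 1 \<Longrightarrow> integral {0..\<rho>} (\<lambda>t. norm (deriv F (of_real t * w))) \<le> B"
  shows "\<exists>L. ((\<lambda>r. F (of_real r * w)) \<longlongrightarrow> L) (at_left 1)"
proof -
  define \<phi> where "\<phi> t = w * deriv F (of_real t * w)" for t
  have "deriv F holomorphic_on ball 0 1" using hF by (auto intro!: holomorphic_deriv)
  then have cF': "continuous_on (ball 0 1) (deriv F)" using holomorphic_on_imp_continuous_on by blast
  have c: "continuous_on {0..\<rho>} \<phi>" if "\<rho> < 1" for \<rho>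
    unfolding \<phi>_def
    by (intro continuous_intros continuous_on_compose2[OF cF'])
       (use that w in \<open>auto simp: norm_mult intro!: continuous_intros\<close>)
  have "norm (\<phi> t) = norm (deriv F (of_real t * w))" for t by (simp add: \<phi>_def norm_mult w)
  then have B\<phi>: "integral {0..\<rho>} (\<lambda>t. norm (\<phi> t)) \<le> B" if "0 \<le> \<rho>" "\<rho> < 1" for \<rho>
    using B[OF that] by simp
  have int: "(\<lambda>t. if t < 1 then \<phi> t else 0) integrable_on {0..1}"
    using integrable_on_01_if_bounded_partial_integrals[OF c B\<phi>] by simp
  define I where "I x = integral {0..x} (\<lambda>t. if t < 1 then \<phi> t else 0)" for x
  have "continuous_on {0..1} I" unfolding I_def by (rule indefinite_integral_continuous_1[OF int])
  then have "(I \<longlongrightarrow> I 1) (at 1 within {0..1})" by (simp add: continuous_on_def)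
  moreover have "at (1::real) within {0..1} = at_left 1" by (rule at_within_Icc_at_left) simp
  ultimately have "(I \<longlongrightarrow> I 1) (at_left 1)" by simp
  then have lim: "((\<lambda>r. F 0 + I r) \<longlongrightarrow> F 0 + I 1) (at_left 1)" by (intro tendsto_intros)
  have "eventually (\<lambda>r. r \<in> {0<..<1}) (at_left (1::real))" by (rule eventually_at_left_real) simp
  then have "eventually (\<lambda>r. F 0 + I r = F (of_real r * w)) (at_left (1::real))"
  proof (rule eventually_mono)
    fix r :: real assume r: "r \<in> {0<..<1}"
    then have "I r = integral {0..r} \<phi>" unfolding I_def by (intro integral_cong) auto
    also have "\<dots> = F (of_real r * w) - F 0"
      using integral_unique[OF has_integral_deriv_ray[OF hF w, of r]] r unfolding \<phi>_def by simp
    finally show "F 0 + I r = F (of_real r * w)" by simp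
  qed
  from Lim_transform_eventually[OF lim this] show ?thesis by blast
qed

lemma norm_radial_limit_le:
  fixes F :: "complex \<Rightarrow> complex"
  assumes L: "((\<lambda>r. F (of_real r * w)) \<longlongrightarrow> L) (at_left 1)"
    and K: "\<And>r. 0 < r \<Longrightarrow> r < 1 \<Longrightarrow> norm (F (of_real r * w)) \<le> K"
  shows "norm (radial_limit F w) \<le> K"
proof -
  have "radial_limit F w = L" unfolding radial_limit_def using L by (simp add: tendsto_Lim)
  moreover have "eventually (\<lambda>r. norm (F (of_real r * w)) \<le> K) (at_left (1::real))"
    using eventually_at_left_real[of 0 1] by (rule eventually_mono) (use K in auto)
  then have "norm L \<le> K" by (intro Lim_norm_ubound[OF _ L]) simp_all
  ultimately show ?thesis by simp
qed

lemma poisson_kernel_eq: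
  "Re ((cis t + a) / (cis t - a)) = (1 - (norm a)^2) / (norm (1 - cnj a * cis t))^2"
proof -
  have "Re ((cis t + a) / (cis t - a))
      = (Re (cis t + a) * Re (cis t - a) + Im (cis t + a) * Im (cis t - a)) / (norm (cis t - a))^2"
    by (simp add: Re_divide cmod_power2)
  also have "Re (cis t + a) * Re (cis t - a) + Im (cis t + a) * Im (cis t - a)
      = ((cos t)^2 + (sin t)^2) - ((Re a)^2 + (Im a)^2)"
    by (simp add: algebra_simps power2_eq_square)
  also have "\<dots> = 1 - (norm a)^2" by (simp add: cmod_power2)
  finally show ?thesis using norm_sub_eq_norm_one_sub_cnj_mult[of "cis t" a] by simp
qed

text \<open>The Poisson kernel has mean one: integrate \<open>(u + a)/(u - a) = 2u/(u - a) - 1\<close> against \<open>du/u\<close>.\<close>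
lemma has_integral_poisson_kernel:
  assumes a: "norm a < 1"
  shows "((\<lambda>t. (1 - (norm a)^2) / (norm (1 - cnj a * cis t))^2) has_integral 2 * pi) {0..2*pi}"
proof -
  have c1: "((\<lambda>u. 2 / (u - a)) has_contour_integral (2 * of_real pi * \<i> * 2)) (circlepath 0 1)"
    using Cauchy_integral_circlepath_simple[of "\<lambda>_. 2" 0 1 a] a by auto
  have c2: "((\<lambda>u. 1 / (u - 0)) has_contour_integral (2 * of_real pi * \<i> * 1)) (circlepath 0 1)"
    using Cauchy_integral_circlepath_simple[of "\<lambda>_. 1" 0 1 0] by auto
  have "((\<lambda>u. 2 / (u - a) - 1 / (u - 0)) has_contour_integral (2 * of_real pi * \<i>)) (circlepath 0 1)"
    using has_contour_integral_diff[OF c1 c2] by (simp add: algebra_simps)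
  then have "((\<lambda>t. (2 / (cis t - a) - 1 / (cis t - 0)) * 1 * \<i> * cis t) has_integral (2 * of_real pi * \<i>)) {0..2*pi}"
    unfolding circlepath_def by (subst (asm) has_contour_integral_part_circlepath_iff) auto
  moreover have "(2 / (cis t - a) - 1 / (cis t - 0)) * 1 * \<i> * cis t = \<i> * ((cis t + a) / (cis t - a))" for t
  proof -
    have "cis t - a \<noteq> 0" using a by (metis norm_cis order_less_irrefl right_minus_eq)
    then show ?thesis by (simp add: field_simps)
  qed
  ultimately have "((\<lambda>t. \<i> * ((cis t + a) / (cis t - a))) has_integral (2 * of_real pi * \<i>)) {0..2*pi}"
    by simp
  from has_integral_mult_right[OF this, of "-\<i>"]
  have "((\<lambda>t. (cis t + a) / (cis t - a)) has_integral (2 * of_real pi)) {0..2*pi}"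
    by (simp add: algebra_simps)
  from has_integral_Re[OF this] show ?thesis by (simp add: poisson_kernel_eq)
qed

lemma poisson_sup_le:
  assumes K: "K \<ge> 0" and rl: "\<And>\<theta>. norm (radial_limit g (cis \<theta>)) \<le> K" and p: "p > 0"
  shows "poisson_sup p g \<le> ennreal (K powr p)"
  unfolding poisson_sup_def
proof (rule SUP_least)
  fix a :: complex assume "a \<in> ball 0 1"
  then have na: "norm a < 1" by simp
  define P where "P \<theta> = (1 - (norm a)^2) / (norm (1 - cnj a * cis \<theta>))^2" for \<theta>
  have "(norm a)^2 \<le> 1" using na by (simp add: abs_square_le_1)
  then have P0: "P \<theta> \<ge> 0" for \<theta> by (simp add: P_def)
  have "((\<lambda>\<theta>. P \<theta> * K powr p) has_integral (2 * pi * K powr p)) {0..2*pi}"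
    using has_integral_mult_left[OF has_integral_poisson_kernel[OF na], of "K powr p"] by (simp add: P_def)
  from nn_integral_has_integral_lebesgue[OF _ this]
  have eq: "(\<integral>\<^sup>+ \<theta>. ennreal (indicator {0..2*pi} \<theta> * (P \<theta> * K powr p)) \<partial>lborel) = ennreal (2 * pi * K powr p)"
    using P0 by simp
  have "(\<integral>\<^sup>+ \<theta>. indicator {0..2*pi} \<theta> * ennreal (P \<theta> * norm (radial_limit g (cis \<theta>)) powr p) \<partial>lborel)
      \<le> (\<integral>\<^sup>+ \<theta>. ennreal (indicator {0..2*pi} \<theta> * (P \<theta> * K powr p)) \<partial>lborel)"
  proof (rule nn_integral_mono)
    fix \<theta> :: real
    have "P \<theta> * norm (radial_limit g (cis \<theta>)) powr p \<le> P \<theta> * K powr p"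
      using rl[of \<theta>] p P0[of \<theta>] by (intro mult_left_mono powr_mono2) auto
    then show "indicator {0..2*pi} \<theta> * ennreal (P \<theta> * norm (radial_limit g (cis \<theta>)) powr p)
       \<le> ennreal (indicator {0..2*pi} \<theta> * (P \<theta> * K powr p))"
      by (auto simp: indicator_def ennreal_leI)
  qed
  then have "ennreal (1 / (2 * pi)) * (\<integral>\<^sup>+ \<theta>. indicator {0..2*pi} \<theta> * ennreal (P \<theta> * norm (radial_limit g (cis \<theta>)) powr p) \<partial>lborel)
      \<le> ennreal (1 / (2 * pi)) * ennreal (2 * pi * K powr p)"
    unfolding eq by (rule mult_left_mono) simp
  also have "\<dots> = ennreal (K powr p)" by (simp add: ennreal_mult'[symmetric])
  finally show "ennreal (1 / (2 * pi)) * (\<integral>\<^sup>+ \<theta>. indicator {0..2*pi} \<theta> *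
           ennreal ((1 - (norm a)\<^sup>2) / (norm (1 - cnj a * cis \<theta>))\<^sup>2 *
                    norm (radial_limit g (cis \<theta>)) powr p) \<partial>lborel) \<le> ennreal (K powr p)"
    unfolding P_def .
qed

lemma poisson_sup_finite:
  assumes p: "p > 0" and K: "\<And>z. z \<in> ball 0 1 \<Longrightarrow> norm (g z) \<le> K"
    and L: "\<And>w. norm w = 1 \<Longrightarrow> \<exists>L. ((\<lambda>r. g (of_real r * w)) \<longlongrightarrow> L) (at_left 1)"
  shows "poisson_sup p g < \<infinity>"
proof -
  have K0: "K \<ge> 0" using K[of 0] by (meson norm_ge_zero order_trans centre_in_ball zero_less_one)
  have "norm (radial_limit g (cis \<theta>)) \<le> K" for \<theta>
  proof -
    obtain L where "((\<lambda>r. g (of_real r * cis \<theta>)) \<longlongrightarrow> L) (at_left 1)" using L[of "cis \<theta>"] by auto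
    then show ?thesis by (rule norm_radial_limit_le) (use K in \<open>auto simp: norm_mult\<close>)
  qed
  then have "poisson_sup p g \<le> ennreal (K powr p)" using K0 p by (intro poisson_sup_le)
  then show ?thesis using le_less_trans by fastforce
qed

lemma S2p_radial_limits:
  assumes p: "p \<ge> 1" and \<psi>: "\<psi> \<in> S2p p" and w: "norm w = 1"
  shows "\<exists>L. ((\<lambda>r. \<psi> (of_real r * w)) \<longlongrightarrow> L) (at_left 1)"
    "\<exists>L. ((\<lambda>r. deriv \<psi> (of_real r * w)) \<longlongrightarrow> L) (at_left 1)"
proof -
  note h = S2p_holomorphic[OF \<psi>]
  have "integral {0..\<rho>} (\<lambda>t. norm (deriv (deriv \<psi>) (of_real t * w))) \<le> pi * (2 * hardy_norm p (deriv (deriv \<psi>)))"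
    if "0 \<le> \<rho>" "\<rho> < 1" for \<rho>
    using integral_norm_ray_le[OF h(3) circle_avg_1_le_hardy_norm[OF p h(4)] w that] by simp
  then show "\<exists>L. ((\<lambda>r. deriv \<psi> (of_real r * w)) \<longlongrightarrow> L) (at_left 1)"
    by (rule radial_limit_exists[OF h(2) w])
  define K where "K = 2 * pi * S2p_norm p \<psi>"
  have c: "continuous_on (ball 0 1) (deriv \<psi>)" using h(2) holomorphic_on_imp_continuous_on by blast
  have "integral {0..\<rho>} (\<lambda>t. norm (deriv \<psi> (of_real t * w))) \<le> K" if \<rho>: "0 \<le> \<rho>" "\<rho> < 1" for \<rho>
  proof -
    have i: "(\<lambda>t. norm (deriv \<psi> (of_real t * w))) integrable_on {0..\<rho>}"
      by (intro integrable_continuous_real continuous_intros continuous_on_compose2[OF c])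
         (use \<rho> w in \<open>auto simp: norm_mult intro!: continuous_intros\<close>)
    have "integral {0..\<rho>} (\<lambda>t. norm (deriv \<psi> (of_real t * w))) \<le> integral {0..\<rho>} (\<lambda>t. K)"
      by (rule integral_le[OF i]) (use \<rho> w S2p_bounded(2)[OF p \<psi>] in \<open>auto simp: K_def norm_mult\<close>)
    also have "\<dots> = \<rho> * K" using \<rho> by simp
    also have "\<dots> \<le> K" by (rule mult_left_le_one_le) (use \<rho> in \<open>auto simp: K_def S2p_norm_nonneg\<close>)
    finally show ?thesis .
  qed
  then show "\<exists>L. ((\<lambda>r. \<psi> (of_real r * w)) \<longlongrightarrow> L) (at_left 1)"
    by (rule radial_limit_exists[OF h(1) w])
qed

lemma S2p_multiplier_conditions:
  assumes p: "p \<ge> 1" and \<psi>: "\<psi> \<in> S2p p"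
  shows "bounded_mult_op (S2p p) (S2p_norm p) \<psi>"
    "bounded_mult_op (hardy p) (hardy_norm p) (\<lambda>z. 2 * deriv \<psi> z)"
    "bounded_mult_op (hardy p) (hardy_norm p) \<psi>"
    "poisson_sup p (\<lambda>z. 2 * deriv \<psi> z) < \<infinity>"
    "poisson_sup p \<psi> < \<infinity>"
proof -
  have p0: "p > 0" using p by simp
  define K where "K = 2 * pi * S2p_norm p \<psi>"
  note h = S2p_holomorphic[OF \<psi>]
  have h2: "(\<lambda>z. 2 * deriv \<psi> z) holomorphic_on ball 0 1" by (rule holomorphic_on_mult[OF holomorphic_on_const h(2)])
  have b: "norm (\<psi> z) \<le> K" "norm (2 * deriv \<psi> z) \<le> 2 * K" if "z \<in> ball 0 1" for z
    using S2p_bounded[OF p \<psi> that] by (auto simp: K_def norm_mult)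
  have lim: "\<exists>L. ((\<lambda>r. \<psi> (of_real r * w)) \<longlongrightarrow> L) (at_left 1)"
    "\<exists>L. ((\<lambda>r. 2 * deriv \<psi> (of_real r * w)) \<longlongrightarrow> L) (at_left 1)" if "norm w = 1" for w
    using S2p_radial_limits[OF p \<psi> that] tendsto_mult_left by blast+
  show "bounded_mult_op (S2p p) (S2p_norm p) \<psi>" by (rule bounded_mult_op_S2p[OF p \<psi>])
  show "bounded_mult_op (hardy p) (hardy_norm p) (\<lambda>z. 2 * deriv \<psi> z)" by (rule bounded_mult_op_hardy[OF p0 h2 b(2)])
  show "bounded_mult_op (hardy p) (hardy_norm p) \<psi>" by (rule bounded_mult_op_hardy[OF p0 h(1) b(1)])
  show "poisson_sup p (\<lambda>z. 2 * deriv \<psi> z) < \<infinity>" by (rule poisson_sup_finite[OF p0 b(2) lim(2)])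
  show "poisson_sup p \<psi> < \<infinity>" by (rule poisson_sup_finite[OF p0 b(1) lim(1)])
qed

theorem corollary2p5:
  fixes p :: real and \<psi> :: "complex \<Rightarrow> complex"
  assumes "1 \<le> p" and "\<psi> holomorphic_on ball 0 1"
  shows "(bounded_mult_op (S2p p) (S2p_norm p) \<psi> \<longleftrightarrow>
            \<psi> \<in> S2p p \<and>
            bounded_mult_op (hardy p) (hardy_norm p) (\<lambda>z. 2 * deriv \<psi> z) \<and>
            bounded_mult_op (hardy p) (hardy_norm p) \<psi>) \<and>
         (\<psi> \<in> S2p p \<and>
            bounded_mult_op (hardy p) (hardy_norm p) (\<lambda>z. 2 * deriv \<psi> z) \<and>
            bounded_mult_op (hardy p) (hardy_norm p) \<psi>
          \<longleftrightarrow>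
          \<psi> \<in> S2p p \<and>
            poisson_sup p (\<lambda>z. 2 * deriv \<psi> z) < \<infinity> \<and>
            poisson_sup p \<psi> < \<infinity>)"
proof -
  have "\<psi> \<in> S2p p" if "bounded_mult_op (S2p p) (S2p_norm p) \<psi>"
    using that const_one_in_S2p[of p] assms(1) unfolding bounded_mult_op_def by fastforce
  then show ?thesis using S2p_multiplier_conditions[OF assms(1)] by blast
qed

end
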